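(* In the generalized nonparametric regression setting of the context, suppose (A1) holds. Let $\tilde\delta>0$ and let $\mathcal{N}_n$ be the minimal number of $\|\cdot\|_\infty$-balls of radius $\tilde\delta$ needed to cover $\mathcal{F}(L,\mathbf{p},s,F)$. Then there is a constant $C>0$ such that for any estimator $\hat f_n$ taking values in $\mathcal{F}(L,\mathbf{p},s,F)$, $$\hat R_n(\hat f_n,f_0)\le\inf_{f\in\mathcal{F}(L,\mathbf{p},s,F)}\mathbb{E}\,\ell(\mathbf{X};f,f_0)+\sqrt{\frac{2C\hat R_n(\hat f_n,f_0)\log\mathcal{N}_n}{n}}+\sqrt{2C}\Big(\frac{\log\mathcal{N}_n}{n}+\sqrt{\frac{\log\mathcal{N}_n}{n}}\tilde\delta\Big)+2\tilde\delta C+\Delta_n(\hat f_n),$$ where $\mathbf{X}$ is an independent copy of $\mathbf{x}_1$.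
   Context: Model: $(\mathbf{x}_i,y_i)$, $i=1,\dots,n$, i.i.d.; conditionally on $\mathbf{x}$, $y$ has density/mass $h(y)\exp\{yf_0(\mathbf{x})-\psi(f_0(\mathbf{x}))\}$, $\psi(\theta)=\log\int h(y)e^{\theta y}dy$. (A1): the support of $h$ does not depend on $\mathbf{x}$ and contains at least two distinct values; $f_0$ is bounded; $\mathbb{P}(|y-\mathbb{E}(y\mid\mathbf{x})|\ge t\mid\mathbf{x})\le2e^{-t/\kappa}$ for all $t>0$, some $\kappa>0$. Networks $\mathcal{F}(L,\mathbf{p},s,F)$: ReLU networks $f(\mathbf{x})=W_Lf_L(\mathbf{x})+v_L$, $f_1=\sigma(W_0\mathbf{x}+v_0)$, $f_l=\sigma(W_{l-1}f_{l-1}+v_{l-1})$, $\sigma(u)=\max(u,0)$, widths $\mathbf{p}$, parameter entries in $[-1,1]$, at most $s$ nonzero parameters, $\sup|f|\le F$. $\ell(\mathbf{x};f,f_0)=-\psi'(f_0(\mathbf{x}))(f(\mathbf{x})-f_0(\mathbf{x}))+\psi(f(\mathbf{x}))-\psi(f_0(\mathbf{x}))$; $\hat R_n(\hat f,f_0)=\mathbb{E}\big[\frac1n\sum_i\ell(\mathbf{x}_i;\hat f,f_0)\big]$. $\Delta_n(\hat f_n)=\mathbb{E}\{\frac1n\sum_i(-y_i\hat f_n(\mathbf{x}_i)+\psi(\hat f_n(\mathbf{x}_i)))-\inf_{f\in\mathcal{F}(L,\mathbf{p},s,F)}\frac1n\sum_i(-y_if(\mathbf{x}_i)+\psi(f(\mathbf{x}_i)))\}$.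 *)

theory Defs
  imports "HOL-Probability.Probability"
begin

text \<open>Vectors of R^k are represented as functions nat => real (only the first k
coordinates matter); a weight matrix is nat => nat => real.\<close>

type_synonym vec = "nat \<Rightarrow> real"
type_synonym mat = "nat \<Rightarrow> nat \<Rightarrow> real"

definition affine :: "nat \<Rightarrow> mat \<Rightarrow> vec \<Rightarrow> vec \<Rightarrow> vec" where
  "affine m W v z = (\<lambda>i. (\<Sum>j<m. W i j * z j) + v i)"

definition relu :: "vec \<Rightarrow> vec" where
  "relu z = (\<lambda>i. max (z i) 0)"

text \<open>net_eval [p0,...,p_{L+1}] [(W_0,v_0),...,(W_L,v_L)] x
  = W_L f_L(x) + v_L, with f_1 = relu(W_0 x + v_0), f_l = relu(W_{l-1} f_{l-1} + v_{l-1}).\<close>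
fun net_eval :: "nat list \<Rightarrow> (mat \<times> vec) list \<Rightarrow> vec \<Rightarrow> vec" where
  "net_eval (m # ms) [(W, v)] z = affine m W v z"
| "net_eval (m # ms) ((W, v) # (W', v') # ps) z = net_eval ms ((W', v') # ps) (relu (affine m W v z))"
| "net_eval _ _ z = z"

text \<open>Parameters: layer l has W_l of size p_{l+1} x p_l and v_l of size p_{l+1};
all entries in [-1,1]; entries outside these index ranges are zero (they do not exist).\<close>
definition valid_params :: "nat list \<Rightarrow> (mat \<times> vec) list \<Rightarrow> bool" where
  "valid_params p ps \<longleftrightarrow> length p = length ps + 1 \<and>
     (\<forall>l<length ps.
        (\<forall>i j. \<bar>fst (ps ! l) i j\<bar> \<le> 1 \<and>
               (\<not> (i < p ! (l + 1) \<and> j < p ! l) \<longrightarrow> fst (ps ! l) i j = 0)) \<and>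
        (\<forall>i. \<bar>snd (ps ! l) i\<bar> \<le> 1 \<and> (p ! (l + 1) \<le> i \<longrightarrow> snd (ps ! l) i = 0)))"

definition nnz_params :: "(mat \<times> vec) list \<Rightarrow> nat" where
  "nnz_params ps = (\<Sum>l<length ps.
      card {(i, j). fst (ps ! l) i j \<noteq> 0} + card {i. snd (ps ! l) i \<noteq> 0})"

text \<open>The class F(L,p,s,F) of real-valued ReLU networks (output width p_{L+1} = 1);
the sup-norm bound is taken over the covariate domain D.\<close>
definition relu_net_class ::
  "vec set \<Rightarrow> nat \<Rightarrow> nat list \<Rightarrow> nat \<Rightarrow> real \<Rightarrow> (vec \<Rightarrow> real) set" where
  "relu_net_class D L p s F = {f. \<exists>ps.
      length ps = L + 1 \<and> length p = L + 2 \<and> p ! (L + 1) = 1 \<and>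
      valid_params p ps \<and> nnz_params ps \<le> s \<and>
      f = (\<lambda>x. net_eval p ps x 0) \<and> (\<forall>x\<in>D. \<bar>f x\<bar> \<le> F)}"

definition sup_ball_cover :: "vec set \<Rightarrow> real \<Rightarrow> (vec \<Rightarrow> real) set \<Rightarrow> (vec \<Rightarrow> real) set \<Rightarrow> bool" where
  "sup_ball_cover D \<delta> Cs S \<longleftrightarrow> S \<subseteq> (\<Union>c\<in>Cs. {f. \<forall>x\<in>D. \<bar>f x - c x\<bar> \<le> \<delta>})"

definition covering_number :: "vec set \<Rightarrow> real \<Rightarrow> (vec \<Rightarrow> real) set \<Rightarrow> nat" where
  "covering_number D \<delta> S = (LEAST k. \<exists>Cs. finite Cs \<and> card Cs = k \<and> sup_ball_cover D \<delta> Cs S)"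

definition psi :: "(real \<Rightarrow> real) \<Rightarrow> real measure \<Rightarrow> real \<Rightarrow> real" where
  "psi h \<nu> \<theta> = ln (LINT y|\<nu>. h y * exp (\<theta> * y))"

definition cond_dens :: "(real \<Rightarrow> real) \<Rightarrow> real measure \<Rightarrow> (vec \<Rightarrow> real) \<Rightarrow> vec \<Rightarrow> real \<Rightarrow> real" where
  "cond_dens h \<nu> f0 x y = h y * exp (y * f0 x - psi h \<nu> (f0 x))"

definition h_support :: "(real \<Rightarrow> real) \<Rightarrow> real measure \<Rightarrow> real set" where
  "h_support h \<nu> = {y. \<forall>e>0. 0 < (\<integral>\<^sup>+z\<in>ball y e. ennreal (h z) \<partial>\<nu>)}"

definition ell :: "(real \<Rightarrow> real) \<Rightarrow> real measure \<Rightarrow> vec \<Rightarrow> (vec \<Rightarrow> real) \<Rightarrow> (vec \<Rightarrow> real) \<Rightarrow> real" where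
  "ell h \<nu> x f f0 = - deriv (psi h \<nu>) (f0 x) * (f x - f0 x) + psi h \<nu> (f x) - psi h \<nu> (f0 x)"

definition sample_space :: "(vec \<times> real) measure \<Rightarrow> nat \<Rightarrow> (nat \<Rightarrow> vec \<times> real) measure" where
  "sample_space P n = PiM {..<n} (\<lambda>_. P)"

definition risk_hat ::
  "(real \<Rightarrow> real) \<Rightarrow> real measure \<Rightarrow> (vec \<times> real) measure \<Rightarrow> nat \<Rightarrow>
   ((nat \<Rightarrow> vec \<times> real) \<Rightarrow> vec \<Rightarrow> real) \<Rightarrow> (vec \<Rightarrow> real) \<Rightarrow> real" where
  "risk_hat h \<nu> P n fhat f0 =
     (LINT \<omega>|sample_space P n. (1 / real n) * (\<Sum>i<n. ell h \<nu> (fst (\<omega> i)) (fhat \<omega>) f0))"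

definition emp_loss ::
  "(real \<Rightarrow> real) \<Rightarrow> real measure \<Rightarrow> nat \<Rightarrow> (nat \<Rightarrow> vec \<times> real) \<Rightarrow> (vec \<Rightarrow> real) \<Rightarrow> real" where
  "emp_loss h \<nu> n \<omega> f =
     (1 / real n) * (\<Sum>i<n. - snd (\<omega> i) * f (fst (\<omega> i)) + psi h \<nu> (f (fst (\<omega> i))))"

definition Delta_n ::
  "(real \<Rightarrow> real) \<Rightarrow> real measure \<Rightarrow> (vec \<times> real) measure \<Rightarrow> nat \<Rightarrow> (vec \<Rightarrow> real) set \<Rightarrow>
   ((nat \<Rightarrow> vec \<times> real) \<Rightarrow> vec \<Rightarrow> real) \<Rightarrow> real" where
  "Delta_n h \<nu> P n S fhat =
     (LINT \<omega>|sample_space P n. emp_loss h \<nu> n \<omega> (fhat \<omega>) - (INF f\<in>S. emp_loss h \<nu> n \<omega> f))"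

end

theory Submission
  imports Defs
begin

text \<open>
The loss \<open>\<ell>(x; f, f\<^sub>0)\<close> is the Bregman divergence \<open>D(f x, f\<^sub>0 x)\<close> of the cumulant
function \<open>\<psi>\<close>. As \<open>\<psi>''\<close> is the variance of a non-degenerate tilted law, it is positive and
continuous, so on the bounded range \<open>[-K, K]\<close> of the class \<open>D(a, b)\<close> is comparable to
\<open>(a - b)\<^sup>2\<close> from both sides. With the centred response \<open>\<epsilon> = y - \<psi>'(f\<^sub>0 x)\<close>, the empirical
loss of \<open>f\<close> minus that of \<open>f\<^sub>0\<close> is the empirical Bregman divergence minus the noise
correlation \<open>n\<^sup>-\<^sup>1 \<Sum>\<^sub>i \<epsilon>\<^sub>i (f - f\<^sub>0)(x\<^sub>i)\<close>. Hence the risk of the estimator \<open>f\<^sub>n\<close> is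
the optimisation gap \<open>\<Delta>\<^sub>n\<close>, plus the mean excess of the empirical infimum over the
empirical loss of \<open>f\<^sub>0\<close> (at most the best population risk, as \<open>\<epsilon>\<close> is conditionally
centred), plus the mean noise correlation of \<open>f\<^sub>n\<close>.

For the last term, fix \<open>\<lambda> \<in> (0, 1]\<close>. For each \<open>t\<close>, the variable
\<open>\<lambda> (t - f\<^sub>0) \<epsilon> - D(f\<^sub>0 + \<lambda> (t - f\<^sub>0), f\<^sub>0)\<close> is the log-likelihood ratio of a change of
parameter, so its exponential has mean one; hence the maximum of its sample sums over a
\<open>2\<delta>\<close>-net \<open>T\<close> inside the class has mean at most \<open>ln |T| \<le> ln N\<close>. Comparing \<open>f\<^sub>n\<close> with its
nearest point of \<open>T\<close> and using the quadratic bounds on \<open>D\<close> bounds the noise term by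
\<open>ln N / (n \<lambda>) + O(\<lambda> R) + O(\<lambda> \<delta>\<^sup>2) + O(\<delta>)\<close>, and optimising over \<open>\<lambda>\<close> gives the claim.
\<close>

section \<open>Elementary inequalities\<close>

lemma exp_abs_le_exp_plus_exp_minus: "exp \<bar>x\<bar> \<le> exp x + exp (- x :: real)"
  by (cases "x \<ge> 0") auto

lemma pow_le_fact_mult_exp:
  fixes x :: real assumes "0 \<le> x" shows "x ^ k \<le> fact k * exp x"
proof -
  obtain t where t: "exp x = (\<Sum>m<Suc k. x ^ m / fact m) + exp t / fact (Suc k) * x ^ Suc k"
    using Maclaurin_exp_le[of x "Suc k"] by blast
  have "x ^ k / fact k \<le> (\<Sum>m<Suc k. x ^ m / fact m)"
    by (rule member_le_sum[where f="\<lambda>m. x ^ m / fact m"]) (use assms in auto)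
  also have "\<dots> \<le> exp x" unfolding t using assms by (auto intro!: mult_nonneg_nonneg)
  finally show ?thesis by (simp add: field_simps)
qed

lemma abs_pow_le_fact_mult_exp_sum:
  fixes y :: real shows "\<bar>y\<bar> ^ k \<le> fact k * (exp y + exp (- y))"
proof -
  have "\<bar>y\<bar> ^ k \<le> fact k * exp \<bar>y\<bar>" by (rule pow_le_fact_mult_exp) simp
  also have "\<dots> \<le> fact k * (exp y + exp (- y))"
    by (intro mult_left_mono exp_abs_le_exp_plus_exp_minus) simp
  finally show ?thesis .
qed

lemma abs_exp_minus_one_minus_le:
  fixes s :: real shows "\<bar>exp s - 1 - s\<bar> \<le> s\<^sup>2 * exp \<bar>s\<bar> / 2"
proof -
  obtain t where t: "\<bar>t\<bar> \<le> \<bar>s\<bar>" "exp s = (\<Sum>m<2. s ^ m / fact m) + exp t / fact 2 * s\<^sup>2"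
    using Maclaurin_exp_le[of s 2] by blast
  have "\<bar>exp s - 1 - s\<bar> = exp t / 2 * s\<^sup>2" using t(2) by (simp add: numeral_2_eq_2)
  also have "\<dots> \<le> exp \<bar>s\<bar> / 2 * s\<^sup>2" using t(1) by (intro mult_right_mono divide_right_mono) auto
  finally show ?thesis by (simp add: mult.commute)
qed

lemma abs_exp_mult_minus_one_minus_le:
  fixes t y :: real assumes "\<bar>t\<bar> \<le> 1"
  shows "\<bar>exp (t * y) - 1 - t * y\<bar> \<le> t\<^sup>2 * y\<^sup>2 * (exp y + exp (- y)) / 2"
proof -
  have "\<bar>exp (t * y) - 1 - t * y\<bar> \<le> (t * y)\<^sup>2 * exp \<bar>t * y\<bar> / 2"
    by (rule abs_exp_minus_one_minus_le)
  also have "\<dots> \<le> (t * y)\<^sup>2 * exp \<bar>y\<bar> / 2"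
    using assms by (auto intro!: divide_right_mono mult_left_mono simp: abs_mult mult_left_le_one_le)
  also have "\<dots> \<le> (t * y)\<^sup>2 * (exp y + exp (- y)) / 2"
    by (intro divide_right_mono mult_left_mono exp_abs_le_exp_plus_exp_minus) auto
  finally show ?thesis by (simp add: power_mult_distrib)
qed

lemma abs_pow_mult_exp_remainder_le:
  fixes t y c :: real assumes "\<bar>t\<bar> \<le> 1" "0 \<le> c"
  shows "\<bar>y ^ k * c * exp (\<theta> * y) * (exp (t * y) - 1 - t * y)\<bar>
    \<le> t\<^sup>2 * ((\<bar>y\<bar> ^ (k + 2) * c * exp ((\<theta> + 1) * y) + \<bar>y\<bar> ^ (k + 2) * c * exp ((\<theta> - 1) * y)) / 2)"
proof -
  have "\<bar>y ^ k * c * exp (\<theta> * y) * (exp (t * y) - 1 - t * y)\<bar>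
      = \<bar>y\<bar> ^ k * c * exp (\<theta> * y) * \<bar>exp (t * y) - 1 - t * y\<bar>"
    using assms(2) by (simp add: abs_mult power_abs)
  also have "\<dots> \<le> \<bar>y\<bar> ^ k * c * exp (\<theta> * y) * (t\<^sup>2 * y\<^sup>2 * (exp y + exp (- y)) / 2)"
    using assms by (intro mult_left_mono abs_exp_mult_minus_one_minus_le) auto
  also have "\<dots> = t\<^sup>2 * ((\<bar>y\<bar> ^ (k + 2) * c * exp ((\<theta> + 1) * y) + \<bar>y\<bar> ^ (k + 2) * c * exp ((\<theta> - 1) * y)) / 2)"
  proof -
    have "exp ((\<theta> + 1) * y) = exp (\<theta> * y) * exp y" "exp ((\<theta> - 1) * y) = exp (\<theta> * y) * exp (- y)"
      by (simp_all add: algebra_simps flip: exp_add)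
    moreover have "\<bar>y\<bar> ^ (k + 2) = \<bar>y\<bar> ^ k * y\<^sup>2"
      by (simp only: power_add power2_abs)
    ultimately show ?thesis by (simp only:) (simp add: algebra_simps)
  qed
  finally show ?thesis .
qed

lemma exp_lower_bound_on_ball:
  assumes "y \<in> ball y0 r"
  shows "exp (- \<bar>\<theta>\<bar> * (\<bar>y0\<bar> + r)) \<le> exp (\<theta> * y)"
proof -
  have "\<bar>y\<bar> \<le> \<bar>y0\<bar> + r" using assms by (auto simp: dist_real_def)
  then have "\<bar>\<theta> * y\<bar> \<le> \<bar>\<theta>\<bar> * (\<bar>y0\<bar> + r)" by (simp add: abs_mult mult_left_mono)
  then show ?thesis by simp
qed

lemma square_add_le: "(x + y)\<^sup>2 \<le> 2 * x\<^sup>2 + 2 * (y\<^sup>2 :: real)"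
  using zero_le_power2[of "x - y"] by (simp add: power2_eq_square algebra_simps)

lemma abs_convex_comb_le:
  fixes a b lam K :: real
  assumes "\<bar>a\<bar> \<le> K" "\<bar>b\<bar> \<le> K" "0 \<le> lam" "lam \<le> 1"
  shows "\<bar>b + lam * (a - b)\<bar> \<le> K"
proof -
  have "\<bar>(1 - lam) * b + lam * a\<bar> \<le> (1 - lam) * K + lam * K"
    using assms abs_triangle_ineq[of "(1 - lam) * b" "lam * a"]
      mult_left_mono[of "\<bar>b\<bar>" K "1 - lam"] mult_left_mono[of "\<bar>a\<bar>" K lam]
    by (simp add: abs_mult)
  then show ?thesis by (simp add: algebra_simps)
qed

lemma real_sqrt_four_mult: "sqrt (4 * x) = 2 * sqrt x"
  using real_sqrt_mult[of 4 x] real_sqrt_unique[of 2 4] by simp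

lemma le_of_lambda_tradeoff:
  fixes R J L A :: real
  assumes L: "0 \<le> L" and A: "0 \<le> A"
    and H: "\<And>lam. 0 < lam \<Longrightarrow> lam \<le> 1 \<Longrightarrow> R \<le> J + L / lam + lam * A"
  shows "R \<le> J + 2 * sqrt (L * A) + 2 * L"
proof -
  have sqrt_nonneg: "0 \<le> sqrt (L * A)" using L A by simp
  consider "L = 0" | "0 < L" "L \<le> A" | "A < L" using L by linarith
  then show ?thesis
  proof cases
    case 1
    have "R \<le> J"
    proof (rule ccontr)
      assume "\<not> R \<le> J"
      define lam where "lam = min 1 ((R - J) / (2 * (A + 1)))"
      have lam: "0 < lam" "lam \<le> 1" using \<open>\<not> R \<le> J\<close> A by (auto simp: lam_def)
      have "lam * A \<le> lam * (A + 1)" using lam by simp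
      also have "\<dots> \<le> (R - J) / (2 * (A + 1)) * (A + 1)"
        unfolding lam_def using A by (intro mult_right_mono) auto
      also have "\<dots> = (R - J) / 2"
      proof -
        have "0 < 2 * A + 2" using A by simp
        then show ?thesis by (simp add: field_simps)
      qed
      finally show False using H[OF lam] 1 \<open>\<not> R \<le> J\<close> by simp
    qed
    then show ?thesis using sqrt_nonneg L by linarith
  next
    case 2
    define lam where "lam = sqrt (L / A)"
    have lam: "0 < lam" "lam \<le> 1" using 2 by (auto simp: lam_def)
    have "L / lam = sqrt (L * A)" "lam * A = sqrt (L * A)"
      using 2 by (simp_all add: lam_def real_sqrt_divide real_sqrt_mult field_simps)
    then show ?thesis using H[OF lam] L by simp
  next
    case 3
    then show ?thesis using H[of 1] sqrt_nonneg by (simp del: real_sqrt_ge_0_iff)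
  qed
qed

lemma (in prob_space) expectation_le_ln_of_nn_integral_exp:
  assumes X: "integrable M X" and bound: "(\<integral>\<^sup>+x. ennreal (exp (X x)) \<partial>M) \<le> ennreal N" and N: "0 < N"
  shows "expectation X \<le> ln N"
proof -
  have exp_measurable: "(\<lambda>x. exp (X x)) \<in> borel_measurable M" using X by measurable
  have exp_integrable: "integrable M (\<lambda>x. exp (X x))"
    using bound by (intro integrableI_bounded[OF exp_measurable]) (auto simp: top_unique less_top[symmetric])
  have "ennreal (expectation (\<lambda>x. exp (X x))) \<le> ennreal N"
    using bound by (subst nn_integral_eq_integral[symmetric, OF exp_integrable]) auto
  then have "expectation (\<lambda>x. exp (X x)) \<le> N" using N by (simp add: ennreal_le_iff)
  have "X x \<le> exp (X x) / N + (ln N - 1)" for x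
  proof -
    have "1 + (X x - ln N) \<le> exp (X x - ln N)" by (rule exp_ge_add_one_self)
    then show ?thesis using N by (simp add: exp_diff)
  qed
  then have "expectation X \<le> expectation (\<lambda>x. exp (X x) / N + (ln N - 1))"
    by (intro integral_mono X Bochner_Integration.integrable_add integrable_divide exp_integrable) auto
  also have "\<dots> = expectation (\<lambda>x. exp (X x)) / N + (ln N - 1)"
    using exp_integrable by (simp add: prob_space)
  also have "\<dots> \<le> N / N + (ln N - 1)"
    using \<open>expectation (\<lambda>x. exp (X x)) \<le> N\<close> N by (intro add_right_mono divide_right_mono) auto
  finally show ?thesis using N by simp
qed

section \<open>Infima over families of continuous functions\<close>

text \<open>For a real set that is not bounded below, \<^const>\<open>Inf\<close> is an unspecified junk value,
  which is nevertheless the same for all such sets.\<close>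

lemma Inf_eq_if_not_bdd_below:
  fixes A B :: "real set"
  assumes "\<not> bdd_below A" "\<not> bdd_below B"
  shows "Inf A = Inf B"
proof -
  have "\<And>z. \<not> (\<forall>x\<in>uminus ` A. x \<le> z)" "\<And>z. \<not> (\<forall>x\<in>uminus ` B. x \<le> z)"
    using assms unfolding bdd_below_def by (metis add.inverse_inverse image_eqI neg_le_iff_le)+
  then have "(\<lambda>z. \<forall>x\<in>uminus ` A. x \<le> z) = (\<lambda>z. \<forall>x\<in>uminus ` B. x \<le> z)"
    by (intro ext iffI) blast+
  then show ?thesis unfolding Inf_real_def Sup_real_def by simp
qed

lemma Inf_subset_eq_if_rational_approx:
  fixes A A' :: "real set"
  assumes sub: "A' \<subseteq> A" and ne: "A' \<noteq> {}"
    and approx: "\<And>a q. a \<in> A \<Longrightarrow> a < q \<Longrightarrow> q \<in> \<rat> \<Longrightarrow> \<exists>a'\<in>A'. a' < q"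
  shows "Inf A' = Inf A"
proof (cases "bdd_below A")
  case True
  then have bdd': "bdd_below A'" using sub by (rule bdd_below_mono)
  have "Inf A \<le> Inf A'" by (rule cInf_superset_mono[OF ne True sub])
  moreover have "\<not> Inf A < Inf A'"
  proof
    assume "Inf A < Inf A'"
    then obtain q where q: "q \<in> \<rat>" "Inf A < q" "q < Inf A'" using Rats_dense_in_real by blast
    then obtain a where "a \<in> A" "a < q" using cInf_less_iff[of A q] True ne sub by auto
    then obtain a' where "a' \<in> A'" "a' < q" using approx q(1) by blast
    then show False using cInf_lower[OF _ bdd', of a'] q(3) by simp
  qed
  ultimately show ?thesis by simp
next
  case False
  have "\<not> bdd_below A'"
  proof
    assume "bdd_below A'"
    then obtain r where r: "\<And>a'. a' \<in> A' \<Longrightarrow> r \<le> a'" unfolding bdd_below_def by auto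
    obtain q where q: "q \<in> \<rat>" "q < r" using Rats_dense_in_real[of "r - 1" r] by auto
    obtain a where "a \<in> A" "a < q" using False unfolding bdd_below_def by (auto simp: not_le)
    then obtain a' where "a' \<in> A'" "a' < q" using approx q(1) by blast
    then show False using r[of a'] q(2) by linarith
  qed
  then show ?thesis by (rule Inf_eq_if_not_bdd_below[OF _ False])
qed

lemma countable_subset_INF_eq:
  fixes E :: "'a::second_countable_topology \<Rightarrow> 'f \<Rightarrow> real"
  assumes ne: "S \<noteq> {}" and cont: "\<And>f. f \<in> S \<Longrightarrow> continuous_on UNIV (\<lambda>\<omega>. E \<omega> f)"
  obtains S' where "S' \<subseteq> S" "countable S'" "\<And>\<omega>. (INF f\<in>S'. E \<omega> f) = (INF f\<in>S. E \<omega> f)"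
proof -
  define U where "U q f = {\<omega>. E \<omega> f < q}" for q f
  have "\<exists>T. countable T \<and> T \<subseteq> S \<and> \<Union>(U q ` T) = \<Union>(U q ` S)" for q
  proof -
    have "open V" if "V \<in> U q ` S" for V
      using that unfolding U_def by (auto intro: open_Collect_less cont)
    then obtain \<F> where "\<F> \<subseteq> U q ` S" "countable \<F>" "\<Union>\<F> = \<Union>(U q ` S)"
      by (rule Lindelof)
    then show ?thesis by (metis countable_subset_image)
  qed
  then obtain T where T: "\<And>q. countable (T q)" "\<And>q. T q \<subseteq> S" "\<And>q. \<Union>(U q ` T q) = \<Union>(U q ` S)"
    by metis
  obtain f1 where f1: "f1 \<in> S" using ne by blast
  define S' where "S' = insert f1 (\<Union>q\<in>\<rat>. T q)"
  show ?thesis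
  proof
    show "S' \<subseteq> S" using T(2) f1 by (auto simp: S'_def)
    show "countable S'" unfolding S'_def using T(1) countable_rat by auto
    show "(INF f\<in>S'. E \<omega> f) = (INF f\<in>S. E \<omega> f)" for \<omega>
    proof (rule Inf_subset_eq_if_rational_approx)
      show "(\<lambda>f. E \<omega> f) ` S' \<subseteq> (\<lambda>f. E \<omega> f) ` S" using T(2) f1 by (auto simp: S'_def)
      show "(\<lambda>f. E \<omega> f) ` S' \<noteq> {}" by (simp add: S'_def)
      fix a q assume "a \<in> (\<lambda>f. E \<omega> f) ` S" "a < q" "q \<in> \<rat>"
      then have "\<omega> \<in> \<Union>(U q ` T q)" unfolding T(3) by (auto simp: U_def)
      then show "\<exists>a'\<in>(\<lambda>f. E \<omega> f) ` S'. a' < q"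
        using \<open>q \<in> \<rat>\<close> by (auto simp: U_def S'_def)
    qed
  qed
qed

section \<open>Networks and covers\<close>

lemma continuous_on_net_eval:
  fixes g :: "'a::topological_space \<Rightarrow> vec"
  assumes "\<And>j. continuous_on UNIV (\<lambda>t. g t j)"
  shows "continuous_on UNIV (\<lambda>t. net_eval p ps (g t) i)"
  using assms
proof (induction ps arbitrary: p g i)
  case Nil
  then show ?case by (cases p) auto
next
  case (Cons wv ps)
  obtain W v where wv: "wv = (W, v)" by (cases wv)
  show ?case
  proof (cases p)
    case Nil
    then show ?thesis using Cons.prems by auto
  next
    case (Cons m ms)
    show ?thesis
    proof (cases ps)
      case Nil
      show ?thesis unfolding \<open>p = m # ms\<close> wv Nil net_eval.simps affine_def
        using Cons.prems by (intro continuous_intros) auto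
    next
      case (Cons wv' ps')
      obtain W' v' where wv': "wv' = (W', v')" by (cases wv')
      have "continuous_on UNIV (\<lambda>t. relu (affine m W v (g t)) j)" for j
        unfolding relu_def affine_def using Cons.prems by (intro continuous_intros) auto
      then have "continuous_on UNIV (\<lambda>t. net_eval ms ps (relu (affine m W v (g t))) i)"
        by (rule Cons.IH)
      then show ?thesis unfolding \<open>p = m # ms\<close> wv Cons wv' by simp
    qed
  qed
qed

lemma continuous_on_relu_net_class: "f \<in> relu_net_class D L p s F \<Longrightarrow> continuous_on UNIV f"
  unfolding relu_net_class_def
  using continuous_on_net_eval[of "\<lambda>x. x"] by (auto simp: continuous_on_product_coordinates)

text \<open>The centres of a minimal cover need not lie in the class; replacing each of them by a
  member of the class within distance \<open>\<delta>\<close> doubles the radius.\<close>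

lemma covering_number_net_in_class:
  assumes cover: "\<exists>Cs. finite Cs \<and> sup_ball_cover D \<delta> Cs S" and ne: "S \<noteq> {}"
  obtains T where "finite T" "T \<subseteq> S" "T \<noteq> {}" "card T \<le> covering_number D \<delta> S"
    "\<And>f. f \<in> S \<Longrightarrow> \<exists>t\<in>T. \<forall>x\<in>D. \<bar>f x - t x\<bar> \<le> 2 * \<delta>"
proof -
  have "\<exists>Cs. finite Cs \<and> card Cs = covering_number D \<delta> S \<and> sup_ball_cover D \<delta> Cs S"
    unfolding covering_number_def by (rule LeastI_ex) (use cover in blast)
  then obtain Cs where Cs: "finite Cs" "card Cs = covering_number D \<delta> S" "sup_ball_cover D \<delta> Cs S"
    by blast
  define A where "A = {c \<in> Cs. \<exists>f\<in>S. \<forall>x\<in>D. \<bar>f x - c x\<bar> \<le> \<delta>}"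
  define pick where "pick c = (SOME f. f \<in> S \<and> (\<forall>x\<in>D. \<bar>f x - c x\<bar> \<le> \<delta>))" for c
  have pick: "pick c \<in> S" "\<forall>x\<in>D. \<bar>pick c x - c x\<bar> \<le> \<delta>" if "c \<in> A" for c
    using someI_ex[of "\<lambda>f. f \<in> S \<and> (\<forall>x\<in>D. \<bar>f x - c x\<bar> \<le> \<delta>)"] that
    unfolding A_def pick_def by blast+
  have centre: "\<exists>c\<in>A. \<forall>x\<in>D. \<bar>f x - c x\<bar> \<le> \<delta>" if "f \<in> S" for f
    using Cs(3) that unfolding sup_ball_cover_def A_def by blast
  show ?thesis
  proof
    show "finite (pick ` A)" using Cs(1) by (simp add: A_def)
    show "pick ` A \<subseteq> S" using pick by auto
    show "pick ` A \<noteq> {}" using centre ne by blast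
    have "card (pick ` A) \<le> card A" using Cs(1) by (intro card_image_le) (simp add: A_def)
    also have "\<dots> \<le> card Cs" using Cs(1) by (intro card_mono) (auto simp: A_def)
    finally show "card (pick ` A) \<le> covering_number D \<delta> S" using Cs(2) by simp
  next
    fix f assume "f \<in> S"
    then obtain c where c: "c \<in> A" "\<forall>x\<in>D. \<bar>f x - c x\<bar> \<le> \<delta>" using centre by blast
    have "\<bar>f x - pick c x\<bar> \<le> 2 * \<delta>" if "x \<in> D" for x
      using c(2) pick(2)[OF c(1)] that by fastforce
    then show "\<exists>t\<in>pick ` A. \<forall>x\<in>D. \<bar>f x - t x\<bar> \<le> 2 * \<delta>" using c(1) by blast
  qed
qed

lemma covering_number_pos:
  assumes "\<exists>Cs. finite Cs \<and> sup_ball_cover D \<delta> Cs S" and "S \<noteq> {}"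
  shows "0 < covering_number D \<delta> S"
proof (rule covering_number_net_in_class[OF assms])
  fix T assume "finite T" "T \<subseteq> S" "T \<noteq> {}" "card T \<le> covering_number D \<delta> S"
  then show ?thesis using card_gt_0_iff[of T] by linarith
qed

section \<open>Exponential families\<close>

locale exp_family =
  fixes \<nu> :: "real measure" and h :: "real \<Rightarrow> real"
  assumes sets_nu: "sets \<nu> = sets borel"
    and h_measurable[measurable]: "h \<in> borel_measurable borel" and h_nonneg: "\<And>y. 0 \<le> h y"
    and integrable_h_exp: "\<And>\<theta>. integrable \<nu> (\<lambda>y. h y * exp (\<theta> * y))"
begin

lemma measurable_nu: "f \<in> borel_measurable borel \<Longrightarrow> f \<in> borel_measurable \<nu>"
  using measurable_cong_sets[OF sets_nu refl] by blast

lemma h_measurable_nu[measurable]: "h \<in> borel_measurable \<nu>"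
  by (rule measurable_nu[OF h_measurable])

lemma integrable_abs_pow_h_exp: "integrable \<nu> (\<lambda>y. \<bar>y\<bar> ^ k * h y * exp (\<theta> * y))"
proof (rule Bochner_Integration.integrable_bound)
  show "integrable \<nu> (\<lambda>y. fact k * (h y * exp ((\<theta> + 1) * y)) + fact k * (h y * exp ((\<theta> - 1) * y)))"
    by (intro Bochner_Integration.integrable_add Bochner_Integration.integrable_mult_right integrable_h_exp)
  show "(\<lambda>y. \<bar>y\<bar> ^ k * h y * exp (\<theta> * y)) \<in> borel_measurable \<nu>"
    by (rule measurable_nu) measurable
  have "\<bar>y\<bar> ^ k * h y * exp (\<theta> * y) \<le> fact k * (h y * exp ((\<theta> + 1) * y)) + fact k * (h y * exp ((\<theta> - 1) * y))"
    for y
  proof -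
    have "\<bar>y\<bar> ^ k * (h y * exp (\<theta> * y)) \<le> fact k * (exp y + exp (- y)) * (h y * exp (\<theta> * y))"
      by (rule mult_right_mono[OF abs_pow_le_fact_mult_exp_sum]) (simp add: h_nonneg)
    then show ?thesis by (simp add: algebra_simps flip: exp_add)
  qed
  then show "AE y in \<nu>. norm (\<bar>y\<bar> ^ k * h y * exp (\<theta> * y))
      \<le> norm (fact k * (h y * exp ((\<theta> + 1) * y)) + fact k * (h y * exp ((\<theta> - 1) * y)))"
    using h_nonneg by (intro AE_I2) (simp add: abs_mult)
qed

lemma integrable_pow_h_exp: "integrable \<nu> (\<lambda>y. y ^ k * h y * exp (\<theta> * y))"
  by (rule Bochner_Integration.integrable_bound[OF integrable_abs_pow_h_exp[of k \<theta>]])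
     (auto intro!: measurable_nu simp: abs_mult power_abs h_nonneg)

definition tilted_moment :: "nat \<Rightarrow> real \<Rightarrow> real" where
  "tilted_moment k \<theta> = (LINT y|\<nu>. y ^ k * h y * exp (\<theta> * y))"

lemma psi_eq_ln_tilted_moment: "psi h \<nu> \<theta> = ln (tilted_moment 0 \<theta>)"
  by (simp add: psi_def tilted_moment_def)

lemma tilted_moment_remainder:
  assumes "\<bar>t\<bar> \<le> 1"
  shows "\<bar>tilted_moment k (\<theta> + t) - tilted_moment k \<theta> - t * tilted_moment (Suc k) \<theta>\<bar>
    \<le> t\<^sup>2 * (LINT y|\<nu>. \<bar>y\<bar> ^ (k + 2) * h y * exp ((\<theta> + 1) * y)
                    + \<bar>y\<bar> ^ (k + 2) * h y * exp ((\<theta> - 1) * y)) / 2"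
proof -
  let ?r = "\<lambda>y. y ^ k * h y * exp (\<theta> * y) * (exp (t * y) - 1 - t * y)"
  have r_eq: "?r = (\<lambda>y. y ^ k * h y * exp ((\<theta> + t) * y) - y ^ k * h y * exp (\<theta> * y)
                        - t * (y ^ Suc k * h y * exp (\<theta> * y)))"
    by (auto simp: algebra_simps exp_add)
  have r_int: "integrable \<nu> ?r"
    unfolding r_eq by (intro Bochner_Integration.integrable_diff
        Bochner_Integration.integrable_mult_right integrable_pow_h_exp)
  have eq: "tilted_moment k (\<theta> + t) - tilted_moment k \<theta> - t * tilted_moment (Suc k) \<theta> = (LINT y|\<nu>. ?r y)"
  proof -
    have "integrable \<nu> (\<lambda>y. y ^ k * h y * exp ((\<theta> + t) * y) - y ^ k * h y * exp (\<theta> * y))"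
      "integrable \<nu> (\<lambda>y. t * (y ^ Suc k * h y * exp (\<theta> * y)))"
      by (intro Bochner_Integration.integrable_diff Bochner_Integration.integrable_mult_right
          integrable_pow_h_exp)+
    then show ?thesis
      unfolding r_eq tilted_moment_def
      by (simp only: Bochner_Integration.integral_diff integrable_pow_h_exp integral_mult_right_zero)
  qed
  have "\<bar>LINT y|\<nu>. ?r y\<bar> \<le> (LINT y|\<nu>. t\<^sup>2 * ((\<bar>y\<bar> ^ (k + 2) * h y * exp ((\<theta> + 1) * y)
                    + \<bar>y\<bar> ^ (k + 2) * h y * exp ((\<theta> - 1) * y)) / 2))"
  proof (rule integral_abs_bound_integral[OF r_int])
    show "integrable \<nu> (\<lambda>y. t\<^sup>2 * ((\<bar>y\<bar> ^ (k + 2) * h y * exp ((\<theta> + 1) * y)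
                    + \<bar>y\<bar> ^ (k + 2) * h y * exp ((\<theta> - 1) * y)) / 2))"
      by (intro Bochner_Integration.integrable_mult_right integrable_divide
          Bochner_Integration.integrable_add integrable_abs_pow_h_exp)
    show "\<bar>?r y\<bar> \<le> t\<^sup>2 * ((\<bar>y\<bar> ^ (k + 2) * h y * exp ((\<theta> + 1) * y)
                    + \<bar>y\<bar> ^ (k + 2) * h y * exp ((\<theta> - 1) * y)) / 2)" for y
      by (rule abs_pow_mult_exp_remainder_le[OF assms h_nonneg])
  qed
  also have "\<dots> = t\<^sup>2 * (LINT y|\<nu>. \<bar>y\<bar> ^ (k + 2) * h y * exp ((\<theta> + 1) * y)
                    + \<bar>y\<bar> ^ (k + 2) * h y * exp ((\<theta> - 1) * y)) / 2"
    by simp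
  finally show ?thesis unfolding eq .
qed

lemma tilted_moment_has_derivative:
  "(tilted_moment k has_real_derivative tilted_moment (Suc k) \<theta>) (at \<theta>)"
proof -
  define W where "W = (LINT y|\<nu>. \<bar>y\<bar> ^ (k + 2) * h y * exp ((\<theta> + 1) * y)
                    + \<bar>y\<bar> ^ (k + 2) * h y * exp ((\<theta> - 1) * y)) / 2"
  have "((\<lambda>t. (tilted_moment k (\<theta> + t) - tilted_moment k \<theta>) / t - tilted_moment (Suc k) \<theta>)
      \<longlongrightarrow> 0) (at 0)"
  proof (rule Lim_null_comparison)
    have "\<bar>(tilted_moment k (\<theta> + t) - tilted_moment k \<theta>) / t - tilted_moment (Suc k) \<theta>\<bar> \<le> \<bar>t\<bar> * W"
      if "t \<noteq> 0" "\<bar>t\<bar> \<le> 1" for t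
    proof -
      have "(tilted_moment k (\<theta> + t) - tilted_moment k \<theta>) / t - tilted_moment (Suc k) \<theta>
          = (tilted_moment k (\<theta> + t) - tilted_moment k \<theta> - t * tilted_moment (Suc k) \<theta>) / t"
        using that by (simp add: field_simps)
      also have "\<bar>\<dots>\<bar> \<le> t\<^sup>2 * W / \<bar>t\<bar>"
        using tilted_moment_remainder[OF that(2), of k \<theta>] unfolding abs_divide W_def times_divide_eq_right
        by (rule divide_right_mono) simp
      also have "\<dots> = \<bar>t\<bar> * W"
        using that by (cases "t > 0") (simp_all add: power2_eq_square)
      finally show ?thesis .
    qed
    then show "\<forall>\<^sub>F t in at 0. norm ((tilted_moment k (\<theta> + t) - tilted_moment k \<theta>) / t
        - tilted_moment (Suc k) \<theta>) \<le> \<bar>t\<bar> * W"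
      unfolding eventually_at by (auto intro!: exI[of _ 1] simp: dist_norm)
    show "((\<lambda>t. \<bar>t\<bar> * W) \<longlongrightarrow> 0) (at 0)"
      by (rule tendsto_eq_intros | simp)+
  qed
  then have "((\<lambda>t. (tilted_moment k (\<theta> + t) - tilted_moment k \<theta>) / t) \<longlongrightarrow> tilted_moment (Suc k) \<theta>) (at 0)"
    by (subst Lim_null) simp
  then show ?thesis by (simp add: DERIV_def)
qed

lemma isCont_tilted_moment: "isCont (tilted_moment k) \<theta>"
  using tilted_moment_has_derivative by (rule DERIV_isCont)

lemma integral_pos_near_support:
  assumes y0: "y0 \<in> h_support h \<nu>" and r: "r > 0" and c: "c > 0"
    and g_meas: "g \<in> borel_measurable borel" and g_nonneg: "\<And>y. 0 \<le> g y"
    and g_ball: "\<And>y. y \<in> ball y0 r \<Longrightarrow> c \<le> g y"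
    and int: "integrable \<nu> (\<lambda>y. g y * h y)"
  shows "0 < (LINT y|\<nu>. g y * h y)"
proof -
  have [measurable]: "g \<in> borel_measurable \<nu>" "ball y0 r \<in> sets \<nu>"
    using measurable_nu[OF g_meas] sets_nu by auto
  have "0 < ennreal c * (\<integral>\<^sup>+z\<in>ball y0 r. ennreal (h z) \<partial>\<nu>)"
    using y0 r c unfolding h_support_def by (simp add: ennreal_zero_less_mult_iff)
  also have "\<dots> = (\<integral>\<^sup>+z. ennreal c * (ennreal (h z) * indicator (ball y0 r) z) \<partial>\<nu>)"
    by (rule nn_integral_cmult[symmetric]) measurable
  also have "\<dots> \<le> (\<integral>\<^sup>+z. ennreal (g z * h z) \<partial>\<nu>)"
  proof (rule nn_integral_mono)
    fix z
    show "ennreal c * (ennreal (h z) * indicator (ball y0 r) z) \<le> ennreal (g z * h z)"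
    proof (cases "z \<in> ball y0 r")
      case True
      then have "c * h z \<le> g z * h z" using g_ball[OF True] h_nonneg[of z] by (simp add: mult_right_mono)
      then show ?thesis using True c h_nonneg[of z] by (simp add: ennreal_mult[symmetric] ennreal_leI)
    qed simp
  qed
  also have "\<dots> = ennreal (LINT y|\<nu>. g y * h y)"
    by (rule nn_integral_eq_integral[OF int]) (simp add: g_nonneg h_nonneg)
  finally show ?thesis by simp
qed

definition h_measure :: "real measure" where
  "h_measure = density \<nu> (\<lambda>y. ennreal (h y))"

lemma sets_h_measure[measurable_cong]: "sets h_measure = sets borel"
  by (simp add: h_measure_def sets_nu)

lemma space_h_measure: "space h_measure = UNIV"
  using sets_eq_imp_space_eq[OF sets_h_measure] by simp

lemma integral_h_measure:
  "f \<in> borel_measurable borel \<Longrightarrow> (LINT y|h_measure. f y) = (LINT y|\<nu>. h y * f y)"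
  unfolding h_measure_def by (subst integral_density) (auto intro!: measurable_nu simp: h_nonneg)

lemma integrable_h_measure_iff:
  "f \<in> borel_measurable borel \<Longrightarrow> integrable h_measure f \<longleftrightarrow> integrable \<nu> (\<lambda>y. h y * f y)"
  unfolding h_measure_def by (subst integrable_density) (auto intro!: measurable_nu simp: h_nonneg)

lemma finite_measure_h_measure: "finite_measure h_measure"
proof (rule finite_measureI)
  have "emeasure h_measure (space h_measure) = (\<integral>\<^sup>+ y. ennreal (h y) \<partial>\<nu>)"
    unfolding h_measure_def space_density
    by (subst emeasure_density) (auto intro!: nn_integral_cong simp: indicator_def)
  also have "\<dots> = ennreal (LINT y|\<nu>. h y * exp (0 * y))"
    using nn_integral_eq_integral[OF integrable_h_exp[of 0]] h_nonneg by simp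
  finally show "emeasure h_measure (space h_measure) \<noteq> \<infinity>" by simp
qed

end

sublocale exp_family \<subseteq> hm: finite_measure h_measure
  by (rule finite_measure_h_measure)

locale nondegenerate_exp_family = exp_family +
  assumes two_support_points: "\<exists>y1 y2. y1 \<noteq> y2 \<and> y1 \<in> h_support h \<nu> \<and> y2 \<in> h_support h \<nu>"
begin

lemma tilted_moment_0_pos: "0 < tilted_moment 0 \<theta>"
proof -
  obtain y1 where y1: "y1 \<in> h_support h \<nu>" using two_support_points by blast
  have "0 < (LINT y|\<nu>. exp (\<theta> * y) * h y)"
    using integrable_h_exp[of \<theta>]
    by (intro integral_pos_near_support[OF y1, of 1 "exp (- \<bar>\<theta>\<bar> * (\<bar>y1\<bar> + 1))"]
        exp_lower_bound_on_ball) (auto simp: mult.commute)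
  then show ?thesis by (simp add: tilted_moment_def mult.commute)
qed

lemma exp_psi: "exp (psi h \<nu> \<theta>) = tilted_moment 0 \<theta>"
  using tilted_moment_0_pos[of \<theta>] by (simp add: psi_eq_ln_tilted_moment)

definition dpsi :: "real \<Rightarrow> real" where
  "dpsi \<theta> = tilted_moment 1 \<theta> / tilted_moment 0 \<theta>"

definition d2psi :: "real \<Rightarrow> real" where
  "d2psi \<theta> = (tilted_moment 2 \<theta> * tilted_moment 0 \<theta> - (tilted_moment 1 \<theta>)\<^sup>2) / (tilted_moment 0 \<theta>)\<^sup>2"

lemma psi_has_derivative: "(psi h \<nu> has_real_derivative dpsi \<theta>) (at \<theta>)"
proof -
  have "((\<lambda>t. ln (tilted_moment 0 t)) has_real_derivative
      (1 / tilted_moment 0 \<theta> * tilted_moment 1 \<theta>)) (at \<theta>)"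
    using tilted_moment_0_pos tilted_moment_has_derivative[of 0 \<theta>]
    by (intro DERIV_chain2[where f=ln]) (auto intro: DERIV_ln_divide)
  then show ?thesis unfolding dpsi_def psi_eq_ln_tilted_moment[abs_def] by simp
qed

lemma dpsi_has_derivative: "(dpsi has_real_derivative d2psi \<theta>) (at \<theta>)"
proof -
  have "((\<lambda>t. tilted_moment 1 t / tilted_moment 0 t) has_real_derivative
      (tilted_moment 2 \<theta> * tilted_moment 0 \<theta> - tilted_moment 1 \<theta> * tilted_moment 1 \<theta>)
        / (tilted_moment 0 \<theta> * tilted_moment 0 \<theta>)) (at \<theta>)"
    using DERIV_divide[OF tilted_moment_has_derivative[of 1 \<theta>] tilted_moment_has_derivative[of 0 \<theta>]]
      tilted_moment_0_pos[of \<theta>]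
    by (simp add: numeral_2_eq_2)
  then show ?thesis unfolding dpsi_def[abs_def] d2psi_def by (simp add: power2_eq_square)
qed

lemma deriv_psi: "deriv (psi h \<nu>) \<theta> = dpsi \<theta>"
  using psi_has_derivative by (rule DERIV_imp_deriv)

lemma isCont_psi: "isCont (psi h \<nu>) \<theta>"
  using psi_has_derivative by (rule DERIV_isCont)

lemma isCont_dpsi: "isCont dpsi \<theta>"
  using dpsi_has_derivative by (rule DERIV_isCont)

lemma isCont_d2psi: "isCont d2psi \<theta>"
  unfolding d2psi_def[abs_def] using tilted_moment_0_pos[of \<theta>]
  by (intro continuous_intros isCont_tilted_moment) auto

lemma psi_measurable[measurable]: "psi h \<nu> \<in> borel_measurable borel"
  using isCont_psi by (intro borel_measurable_continuous_onI continuous_at_imp_continuous_on) auto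

lemma dpsi_measurable[measurable]: "dpsi \<in> borel_measurable borel"
  using isCont_dpsi by (intro borel_measurable_continuous_onI continuous_at_imp_continuous_on) auto

lemma
  shows integrable_square_dev_exp_h: "integrable \<nu> (\<lambda>y. (y - c)\<^sup>2 * exp (\<theta> * y) * h y)"
    and integral_square_dev_exp_h: "(LINT y|\<nu>. (y - c)\<^sup>2 * exp (\<theta> * y) * h y)
      = tilted_moment 2 \<theta> - 2 * c * tilted_moment 1 \<theta> + c\<^sup>2 * tilted_moment 0 \<theta>"
proof -
  have eq: "(\<lambda>y. (y - c)\<^sup>2 * exp (\<theta> * y) * h y) = (\<lambda>y. y ^ 2 * h y * exp (\<theta> * y)
      - (2 * c) * (y ^ 1 * h y * exp (\<theta> * y)) + c\<^sup>2 * (y ^ 0 * h y * exp (\<theta> * y)))"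
    by (auto simp: power2_eq_square algebra_simps)
  have i: "integrable \<nu> (\<lambda>y. y ^ 2 * h y * exp (\<theta> * y) - (2 * c) * (y ^ 1 * h y * exp (\<theta> * y)))"
    "integrable \<nu> (\<lambda>y. c\<^sup>2 * (y ^ 0 * h y * exp (\<theta> * y)))"
    "integrable \<nu> (\<lambda>y. (2 * c) * (y ^ 1 * h y * exp (\<theta> * y)))"
    by (intro Bochner_Integration.integrable_diff Bochner_Integration.integrable_mult_right
        integrable_pow_h_exp)+
  show "integrable \<nu> (\<lambda>y. (y - c)\<^sup>2 * exp (\<theta> * y) * h y)"
    unfolding eq by (rule Bochner_Integration.integrable_add[OF i(1,2)])
  show "(LINT y|\<nu>. (y - c)\<^sup>2 * exp (\<theta> * y) * h y)
      = tilted_moment 2 \<theta> - 2 * c * tilted_moment 1 \<theta> + c\<^sup>2 * tilted_moment 0 \<theta>"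
    unfolding eq tilted_moment_def
    by (simp only: Bochner_Integration.integral_add[OF i(1,2)]
        Bochner_Integration.integral_diff[OF integrable_pow_h_exp i(3)] integral_mult_right_zero)
qed

lemma integral_square_dev_exp_h_pos: "0 < (LINT y|\<nu>. (y - c)\<^sup>2 * exp (\<theta> * y) * h y)"
proof -
  obtain y0 where y0: "y0 \<in> h_support h \<nu>" "y0 \<noteq> c"
    using two_support_points by metis
  define r where "r = \<bar>y0 - c\<bar> / 2"
  have r: "0 < r" using y0 by (simp add: r_def)
  have "r\<^sup>2 * exp (- \<bar>\<theta>\<bar> * (\<bar>y0\<bar> + r)) \<le> (y - c)\<^sup>2 * exp (\<theta> * y)" if y: "y \<in> ball y0 r" for y
  proof (rule mult_mono[OF _ exp_lower_bound_on_ball[OF y]])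
    have "dist y0 y < r" using y by simp
    then have "r \<le> \<bar>y - c\<bar>" unfolding r_def dist_real_def by argo
    then have "r\<^sup>2 \<le> \<bar>y - c\<bar>\<^sup>2" using r by (intro power_mono) auto
    then show "r\<^sup>2 \<le> (y - c)\<^sup>2" by simp
  qed auto
  then show ?thesis
    using r integrable_square_dev_exp_h[of c \<theta>]
    by (intro integral_pos_near_support[OF y0(1) r, of "r\<^sup>2 * exp (- \<bar>\<theta>\<bar> * (\<bar>y0\<bar> + r))"]) auto
qed

lemma d2psi_pos: "0 < d2psi \<theta>"
proof -
  let ?Z = "\<lambda>k. tilted_moment k \<theta>"
  have Z0: "0 < ?Z 0" by (rule tilted_moment_0_pos)
  have "0 < ?Z 2 - 2 * (?Z 1 / ?Z 0) * ?Z 1 + (?Z 1 / ?Z 0)\<^sup>2 * ?Z 0"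
    using integral_square_dev_exp_h_pos[of "?Z 1 / ?Z 0" \<theta>]
    by (simp only: integral_square_dev_exp_h)
  also have "\<dots> = (?Z 2 * ?Z 0 - (?Z 1)\<^sup>2) / ?Z 0"
    using Z0 by (simp add: field_simps power2_eq_square)
  finally show ?thesis
    unfolding d2psi_def using Z0 by (simp add: zero_less_divide_iff)
qed

definition bregman :: "real \<Rightarrow> real \<Rightarrow> real" where
  "bregman a b = psi h \<nu> a - psi h \<nu> b - dpsi b * (a - b)"

lemma bregman_measurable[measurable]:
  assumes [measurable]: "f \<in> borel_measurable M" "g \<in> borel_measurable M"
  shows "(\<lambda>x. bregman (f x) (g x)) \<in> borel_measurable M"
  unfolding bregman_def by measurable

lemma ell_eq_bregman: "ell h \<nu> x f f0 = bregman (f x) (f0 x)"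
  by (simp add: ell_def bregman_def deriv_psi algebra_simps)

lemma bregman_eq_taylor: "\<exists>t. min a b \<le> t \<and> t \<le> max a b \<and> bregman a b = d2psi t / 2 * (a - b)\<^sup>2"
proof (cases "a = b")
  case True
  then show ?thesis by (intro exI[of _ b]) (simp add: bregman_def)
next
  case False
  define diff where "diff = (\<lambda>k::nat. if k = 0 then psi h \<nu> else if k = 1 then dpsi else d2psi)"
  have "\<exists>t. (if a < b then a < t \<and> t < b else b < t \<and> t < a) \<and>
    psi h \<nu> a = (\<Sum>m<2. (diff m b / fact m) * (a - b) ^ m) + (diff 2 t / fact 2) * (a - b) ^ 2"
  proof (rule Taylor[of 2 diff "psi h \<nu>" "min a b" "max a b" b a])
    show "\<forall>m t. m < 2 \<and> min a b \<le> t \<and> t \<le> max a b \<longrightarrow> (diff m has_real_derivative diff (Suc m) t) (at t)"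
      by (auto simp: diff_def less_2_cases_iff psi_has_derivative dpsi_has_derivative)
  qed (use False in \<open>auto simp: diff_def\<close>)
  then obtain t where t: "if a < b then a < t \<and> t < b else b < t \<and> t < a"
    "psi h \<nu> a = (\<Sum>m<2. (diff m b / fact m) * (a - b) ^ m) + (diff 2 t / fact 2) * (a - b) ^ 2"
    by blast
  have "bregman a b = d2psi t / 2 * (a - b)\<^sup>2"
    using t(2) by (simp add: bregman_def diff_def numeral_2_eq_2)
  moreover have "min a b \<le> t \<and> t \<le> max a b" using t(1) by (auto split: if_splits)
  ultimately show ?thesis by blast
qed

lemma bregman_nonneg: "0 \<le> bregman a b"
  using bregman_eq_taylor[of a b] d2psi_pos by (metis less_imp_le divide_nonneg_pos mult_nonneg_nonneg
      zero_le_power2 zero_less_numeral)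

lemma bregman_quadratic_bounds:
  obtains m M where "0 < m" and "0 < M"
    and "\<And>a b. \<bar>a\<bar> \<le> K \<Longrightarrow> \<bar>b\<bar> \<le> K \<Longrightarrow> m * (a - b)\<^sup>2 \<le> bregman a b"
    and "\<And>a b. \<bar>a\<bar> \<le> K \<Longrightarrow> \<bar>b\<bar> \<le> K \<Longrightarrow> bregman a b \<le> M * (a - b)\<^sup>2"
proof (cases "K \<ge> 0")
  case True
  have c: "continuous_on {-K..K} d2psi"
    using isCont_d2psi by (intro continuous_at_imp_continuous_on) auto
  obtain t0 where t0: "t0 \<in> {-K..K}" "\<forall>y\<in>{-K..K}. d2psi t0 \<le> d2psi y"
    using continuous_attains_inf[OF _ _ c] True by auto
  obtain t1 where t1: "t1 \<in> {-K..K}" "\<forall>y\<in>{-K..K}. d2psi y \<le> d2psi t1"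
    using continuous_attains_sup[OF _ _ c] True by auto
  show ?thesis
  proof (rule that[of "d2psi t0 / 2" "d2psi t1 / 2"])
    show "0 < d2psi t0 / 2" "0 < d2psi t1 / 2" using d2psi_pos by simp_all
    fix a b :: real assume ab: "\<bar>a\<bar> \<le> K" "\<bar>b\<bar> \<le> K"
    obtain t where t: "min a b \<le> t" "t \<le> max a b" "bregman a b = d2psi t / 2 * (a - b)\<^sup>2"
      using bregman_eq_taylor by blast
    have "t \<in> {-K..K}" using t ab by auto
    then show "d2psi t0 / 2 * (a - b)\<^sup>2 \<le> bregman a b" "bregman a b \<le> d2psi t1 / 2 * (a - b)\<^sup>2"
      unfolding t(3) using t0(2) t1(2) by (auto intro!: mult_right_mono divide_right_mono)
  qed
next
  case False
  then show ?thesis by (intro that[of 1 1]) auto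
qed

text \<open>\<open>tilt b\<close> is the density, with respect to \<open>h_measure\<close>, of the member of the family
  with natural parameter \<open>b\<close>.\<close>

definition tilt :: "real \<Rightarrow> real \<Rightarrow> real" where
  "tilt b y = exp (y * b - psi h \<nu> b)"

lemma tilt_pos: "0 < tilt b y"
  by (simp add: tilt_def)

lemma tilt_measurable[measurable]:
  assumes [measurable]: "f \<in> borel_measurable M" "g \<in> borel_measurable M"
  shows "(\<lambda>x. tilt (f x) (g x)) \<in> borel_measurable M"
  unfolding tilt_def by measurable

lemma
  shows integrable_tilt_mult_exp: "integrable h_measure (\<lambda>y. tilt b y * exp (s * y))"
    and integral_tilt_mult_exp:
      "(LINT y|h_measure. tilt b y * exp (s * y)) = exp (psi h \<nu> (b + s) - psi h \<nu> b)"
proof -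
  have eq: "(\<lambda>y. h y * (tilt b y * exp (s * y)))
      = (\<lambda>y. exp (- psi h \<nu> b) * (y ^ 0 * h y * exp ((b + s) * y)))"
    by (auto simp: tilt_def algebra_simps simp flip: exp_add)
  have m: "(\<lambda>y. tilt b y * exp (s * y)) \<in> borel_measurable borel" by measurable
  have "integrable \<nu> (\<lambda>y. h y * (tilt b y * exp (s * y)))"
    unfolding eq by (intro Bochner_Integration.integrable_mult_right integrable_pow_h_exp)
  then show "integrable h_measure (\<lambda>y. tilt b y * exp (s * y))"
    by (simp add: integrable_h_measure_iff[OF m])
  have "(LINT y|h_measure. tilt b y * exp (s * y)) = exp (- psi h \<nu> b) * tilted_moment 0 (b + s)"
    unfolding integral_h_measure[OF m] eq tilted_moment_def by simp
  also have "\<dots> = exp (psi h \<nu> (b + s) - psi h \<nu> b)"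
    by (simp add: exp_psi[symmetric] exp_diff exp_minus field_simps)
  finally show "(LINT y|h_measure. tilt b y * exp (s * y)) = exp (psi h \<nu> (b + s) - psi h \<nu> b)" .
qed

lemma
  shows integrable_tilt: "integrable h_measure (tilt b)"
    and integral_tilt: "(LINT y|h_measure. tilt b y) = 1"
  using integrable_tilt_mult_exp[of b 0] integral_tilt_mult_exp[of b 0] by simp_all

lemma nn_integral_tilt: "(\<integral>\<^sup>+y. ennreal (tilt b y) \<partial>h_measure) = 1"
  using nn_integral_eq_integral[OF integrable_tilt] integral_tilt tilt_pos by (simp add: less_imp_le)

lemma integrable_indicator_tilt:
  "B \<in> sets borel \<Longrightarrow> integrable h_measure (\<lambda>y. indicator B y * tilt b y)"
  by (rule Bochner_Integration.integrable_bound[OF integrable_tilt[of b]])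
     (auto simp: indicator_def tilt_pos less_imp_le)

lemma integral_indicator_tilt_bounds:
  assumes "B \<in> sets borel"
  shows "0 \<le> (LINT y|h_measure. indicator B y * tilt b y)" "(LINT y|h_measure. indicator B y * tilt b y) \<le> 1"
proof -
  show "0 \<le> (LINT y|h_measure. indicator B y * tilt b y)"
    by (intro integral_nonneg_AE) (auto simp: tilt_pos less_imp_le)
  have "(LINT y|h_measure. indicator B y * tilt b y) \<le> (LINT y|h_measure. tilt b y)"
    using assms by (intro integral_mono integrable_indicator_tilt integrable_tilt)
      (auto simp: indicator_def tilt_pos less_imp_le)
  then show "(LINT y|h_measure. indicator B y * tilt b y) \<le> 1" by (simp add: integral_tilt)
qed

lemma
  shows integrable_tilt_mult_id: "integrable h_measure (\<lambda>y. tilt b y * y)"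
    and integral_tilt_mult_id: "(LINT y|h_measure. tilt b y * y) = dpsi b"
proof -
  have eq: "(\<lambda>y. h y * (tilt b y * y)) = (\<lambda>y. exp (- psi h \<nu> b) * (y ^ 1 * h y * exp (b * y)))"
    by (auto simp: tilt_def algebra_simps simp flip: exp_add)
  have m: "(\<lambda>y. tilt b y * y) \<in> borel_measurable borel" by measurable
  have "integrable \<nu> (\<lambda>y. h y * (tilt b y * y))"
    unfolding eq by (intro Bochner_Integration.integrable_mult_right integrable_pow_h_exp)
  then show "integrable h_measure (\<lambda>y. tilt b y * y)"
    by (simp add: integrable_h_measure_iff[OF m])
  have "(LINT y|h_measure. tilt b y * y) = exp (- psi h \<nu> b) * tilted_moment 1 b"
    unfolding integral_h_measure[OF m] eq tilted_moment_def by simp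
  also have "\<dots> = dpsi b"
    using tilted_moment_0_pos[of b] by (simp add: dpsi_def exp_psi[symmetric] exp_minus field_simps)
  finally show "(LINT y|h_measure. tilt b y * y) = dpsi b" .
qed

end

section \<open>The law of an observation\<close>

locale regression_model = nondegenerate_exp_family \<nu> h + mu: prob_space \<mu>
  for \<nu> h and \<mu> :: "vec measure" +
  fixes f0 :: "vec \<Rightarrow> real" and P :: "(vec \<times> real) measure" and D :: "vec set" and B0 :: real
  assumes sets_mu: "sets \<mu> = sets borel" and AE_mu_D: "AE x in \<mu>. x \<in> D"
    and f0_measurable[measurable]: "f0 \<in> borel_measurable borel"
    and sets_P: "sets P = sets (borel :: (vec \<times> real) measure)"
    and P_rectangle: "\<And>A B. A \<in> sets borel \<Longrightarrow> B \<in> sets borel \<Longrightarrow>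
        emeasure P (A \<times> B) = ennreal (LINT x:A|\<mu>. (LINT y:B|\<nu>. cond_dens h \<nu> f0 x y))"
    and f0_bounded: "\<And>x. x \<in> D \<Longrightarrow> \<bar>f0 x\<bar> \<le> B0"
begin

lemma space_mu: "space \<mu> = UNIV"
  using sets_eq_imp_space_eq[OF sets_mu] by simp

lemma measurable_mu: "f \<in> borel_measurable borel \<Longrightarrow> f \<in> borel_measurable \<mu>"
  using measurable_cong_sets[OF sets_mu refl] by blast

lemma sets_P_pair: "sets P = sets (borel \<Otimes>\<^sub>M (borel :: real measure) :: (vec \<times> real) measure)"
  using sets_P borel_prod by metis

lemma measurable_P: "f \<in> borel_measurable (borel \<Otimes>\<^sub>M borel) \<Longrightarrow> f \<in> borel_measurable P"
  using measurable_cong_sets[OF sets_P_pair refl] by blast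

lemma sets_mu_h_measure: "sets (\<mu> \<Otimes>\<^sub>M h_measure) = sets (borel \<Otimes>\<^sub>M (borel :: real measure) :: (vec \<times> real) measure)"
  using sets_pair_measure_cong[OF sets_mu sets_h_measure] by metis

lemma measurable_mu_h_measure:
  "f \<in> borel_measurable (borel \<Otimes>\<^sub>M borel) \<Longrightarrow> f \<in> borel_measurable (\<mu> \<Otimes>\<^sub>M h_measure)"
  using measurable_cong_sets[OF sets_mu_h_measure refl] by blast

lemma pair_sigma_finite_mu_h_measure: "pair_sigma_finite \<mu> h_measure"
  by (intro pair_sigma_finite.intro mu.sigma_finite_measure_axioms hm.sigma_finite_measure_axioms)

definition joint :: "(vec \<times> real) measure" where
  "joint = density (\<mu> \<Otimes>\<^sub>M h_measure) (\<lambda>z. ennreal (tilt (f0 (fst z)) (snd z)))"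

lemma nn_integral_joint:
  assumes G: "G \<in> borel_measurable (borel \<Otimes>\<^sub>M borel)"
  shows "(\<integral>\<^sup>+z. G z \<partial>joint) = (\<integral>\<^sup>+x. (\<integral>\<^sup>+y. ennreal (tilt (f0 x) y) * G (x, y) \<partial>h_measure) \<partial>\<mu>)"
proof -
  have "(\<integral>\<^sup>+z. G z \<partial>joint) = (\<integral>\<^sup>+z. ennreal (tilt (f0 (fst z)) (snd z)) * G z \<partial>(\<mu> \<Otimes>\<^sub>M h_measure))"
    unfolding joint_def by (rule nn_integral_density) (intro measurable_mu_h_measure G; measurable)+
  also have "\<dots> = (\<integral>\<^sup>+x. (\<integral>\<^sup>+y. ennreal (tilt (f0 x) y) * G (x, y) \<partial>h_measure) \<partial>\<mu>)"
    by (rule hm.nn_integral_fst[symmetric, where f="\<lambda>z. ennreal (tilt (f0 (fst z)) (snd z)) * G z", simplified])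
       (intro measurable_mu_h_measure borel_measurable_times_ennreal G; measurable)
  finally show ?thesis .
qed

lemma set_integral_cond_dens:
  assumes "B \<in> sets borel"
  shows "(LINT y:B|\<nu>. cond_dens h \<nu> f0 x y) = (LINT y|h_measure. indicator B y * tilt (f0 x) y)"
proof -
  have "(LINT y:B|\<nu>. cond_dens h \<nu> f0 x y) = (LINT y|\<nu>. h y * (indicator B y * tilt (f0 x) y))"
    unfolding set_lebesgue_integral_def cond_dens_def tilt_def
    by (rule Bochner_Integration.integral_cong) (auto simp: indicator_def)
  also have "\<dots> = (LINT y|h_measure. indicator B y * tilt (f0 x) y)"
    using assms by (subst integral_h_measure) auto
  finally show ?thesis .
qed

lemma emeasure_joint_rectangle:
  assumes A: "A \<in> sets borel" and B: "B \<in> sets borel"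
  shows "emeasure joint (A \<times> B) = ennreal (LINT x:A|\<mu>. (LINT y:B|\<nu>. cond_dens h \<nu> f0 x y))"
proof -
  define \<phi> where "\<phi> x = (LINT y|h_measure. indicator B y * tilt (f0 x) y)" for x
  interpret pair_sigma_finite \<mu> h_measure by (rule pair_sigma_finite_mu_h_measure)
  have \<phi>_measurable: "\<phi> \<in> borel_measurable \<mu>"
    unfolding \<phi>_def
    by (rule hm.borel_measurable_lebesgue_integral, rule measurable_mu_h_measure) (use B in measurable)
  have \<phi>_bounds: "0 \<le> \<phi> x" "\<phi> x \<le> 1" for x
    unfolding \<phi>_def by (rule integral_indicator_tilt_bounds[OF B])+
  have "emeasure joint (A \<times> B) = (\<integral>\<^sup>+z. indicator (A \<times> B) z \<partial>joint)"
    using A B sets_mu_h_measure by (subst nn_integral_indicator) (auto simp: joint_def)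
  also have "\<dots> = (\<integral>\<^sup>+x. (\<integral>\<^sup>+y. ennreal (tilt (f0 x) y) * indicator (A \<times> B) (x, y) \<partial>h_measure) \<partial>\<mu>)"
    by (rule nn_integral_joint) (use A B in measurable)
  also have "\<dots> = (\<integral>\<^sup>+x. ennreal (indicator A x * \<phi> x) \<partial>\<mu>)"
  proof (rule nn_integral_cong)
    fix x
    have "(\<integral>\<^sup>+y. ennreal (tilt (f0 x) y) * indicator (A \<times> B) (x, y) \<partial>h_measure)
        = (\<integral>\<^sup>+y. ennreal (indicator A x * (indicator B y * tilt (f0 x) y)) \<partial>h_measure)"
      by (intro nn_integral_cong) (auto simp: indicator_def)
    also have "\<dots> = ennreal (indicator A x * \<phi> x)"
      using Bochner_Integration.integrable_mult_right[OF integrable_indicator_tilt[OF B], of "indicator A x"]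
      unfolding \<phi>_def
      by (subst nn_integral_eq_integral) (auto simp: indicator_def tilt_pos less_imp_le)
    finally show "(\<integral>\<^sup>+y. ennreal (tilt (f0 x) y) * indicator (A \<times> B) (x, y) \<partial>h_measure)
        = ennreal (indicator A x * \<phi> x)" .
  qed
  also have "\<dots> = ennreal (LINT x|\<mu>. indicator A x * \<phi> x)"
  proof (rule nn_integral_eq_integral)
    show "integrable \<mu> (\<lambda>x. indicator A x * \<phi> x)"
      using A \<phi>_measurable sets_mu \<phi>_bounds
      by (intro mu.integrable_const_bound[where B=1]) (auto simp: indicator_def)
  qed (use \<phi>_bounds in \<open>auto simp: indicator_def\<close>)
  also have "\<dots> = ennreal (LINT x:A|\<mu>. (LINT y:B|\<nu>. cond_dens h \<nu> f0 x y))"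
    using set_integral_cond_dens[OF B] by (simp add: set_lebesgue_integral_def \<phi>_def)
  finally show ?thesis .
qed

lemma P_eq_joint: "P = joint"
proof -
  let ?E = "{A \<times> B |A B. A \<in> sets \<mu> \<and> B \<in> sets h_measure}"
  have sets_generated: "sets (\<mu> \<Otimes>\<^sub>M h_measure) = sigma_sets UNIV ?E"
    using sets_pair_measure[of \<mu> h_measure] by (simp add: space_pair_measure space_mu space_h_measure)
  show ?thesis
  proof (rule measure_eqI_generator_eq[OF Int_stable_pair_measure_generator[of \<mu> h_measure],
        where \<Omega>=UNIV and A="\<lambda>_. UNIV"])
    show "?E \<subseteq> Pow UNIV" by auto
    show "sets P = sigma_sets UNIV ?E"
      using sets_P_pair sets_mu_h_measure sets_generated by simp
    show "sets joint = sigma_sets UNIV ?E" using sets_generated by (simp add: joint_def)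
    show "emeasure P X = emeasure joint X" if "X \<in> ?E" for X
      using that sets_mu sets_h_measure by (auto simp: P_rectangle emeasure_joint_rectangle)
    show "range (\<lambda>_. UNIV) \<subseteq> ?E"
      using sets.top[of \<mu>] sets.top[of h_measure] by (auto simp: space_mu space_h_measure intro!: exI[of _ UNIV])
    show "emeasure P UNIV \<noteq> \<infinity>" using P_rectangle[of UNIV UNIV] by simp
  qed simp
qed

lemma nn_integral_P:
  assumes "G \<in> borel_measurable (borel \<Otimes>\<^sub>M borel)"
  shows "(\<integral>\<^sup>+z. G z \<partial>P) = (\<integral>\<^sup>+x. (\<integral>\<^sup>+y. ennreal (tilt (f0 x) y) * G (x, y) \<partial>h_measure) \<partial>\<mu>)"
  unfolding P_eq_joint by (rule nn_integral_joint[OF assms])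

lemma prob_space_P: "prob_space P"
proof
  have "emeasure P (space P) = (\<integral>\<^sup>+z. 1 \<partial>P)" by simp
  also have "\<dots> = (\<integral>\<^sup>+x. 1 \<partial>\<mu>)" by (subst nn_integral_P) (simp_all add: nn_integral_tilt)
  also have "\<dots> = 1" by (simp add: mu.emeasure_space_1)
  finally show "emeasure P (space P) = 1" .
qed

end

sublocale regression_model \<subseteq> P: prob_space P
  by (rule prob_space_P)

context regression_model
begin

lemma integral_P:
  assumes g: "g \<in> borel_measurable (borel \<Otimes>\<^sub>M borel)" and int: "integrable P g"
  shows "integral\<^sup>L P g = (LINT x|\<mu>. (LINT y|h_measure. tilt (f0 x) y * g (x, y)))"
proof -
  interpret pair_sigma_finite \<mu> h_measure by (rule pair_sigma_finite_mu_h_measure)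
  have [measurable]: "g \<in> borel_measurable (\<mu> \<Otimes>\<^sub>M h_measure)" by (rule measurable_mu_h_measure[OF g])
  have density_measurable: "(\<lambda>z. tilt (f0 (fst z)) (snd z)) \<in> borel_measurable (\<mu> \<Otimes>\<^sub>M h_measure)"
    by (rule measurable_mu_h_measure) measurable
  have int_pair: "integrable (\<mu> \<Otimes>\<^sub>M h_measure) (\<lambda>z. tilt (f0 (fst z)) (snd z) * g z)"
    using int unfolding P_eq_joint joint_def
    by (subst (asm) integrable_density) (auto simp: tilt_pos less_imp_le density_measurable)
  have "(LINT z|(\<mu> \<Otimes>\<^sub>M h_measure). tilt (f0 (fst z)) (snd z) * g z)
      = (LINT x|\<mu>. (LINT y|h_measure. tilt (f0 x) y * g (x, y)))"
    using integral_fst'[OF int_pair] by simp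
  moreover have "integral\<^sup>L P g = (LINT z|(\<mu> \<Otimes>\<^sub>M h_measure). tilt (f0 (fst z)) (snd z) * g z)"
    unfolding P_eq_joint joint_def
    by (subst integral_density) (auto simp: tilt_pos less_imp_le density_measurable)
  ultimately show ?thesis by simp
qed

lemma AE_P_fst:
  assumes "AE x in \<mu>. Q x"
  shows "AE z in P. Q (fst z)"
proof -
  obtain N where N: "{x \<in> space \<mu>. \<not> Q x} \<subseteq> N" "emeasure \<mu> N = 0" "N \<in> sets \<mu>"
    using AE_E[OF assms] by blast
  have N_UNIV: "N \<times> UNIV \<in> sets (borel \<Otimes>\<^sub>M borel)" using N(3) sets_mu by (intro pair_measureI) auto
  have "emeasure P (N \<times> UNIV) = (\<integral>\<^sup>+z. indicator (N \<times> UNIV) z \<partial>P)"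
    using N_UNIV sets_P_pair by (subst nn_integral_indicator) auto
  also have "\<dots> = (\<integral>\<^sup>+x. indicator N x \<partial>\<mu>)"
  proof (subst nn_integral_P)
    have "(\<integral>\<^sup>+y. ennreal (tilt (f0 x) y) * indicator (N \<times> UNIV) (x, y) \<partial>h_measure)
        = (\<integral>\<^sup>+y. ennreal (tilt (f0 x) y) \<partial>h_measure) * indicator N x" for x
      by (cases "x \<in> N") (auto simp: indicator_def)
    then show "(\<integral>\<^sup>+x. (\<integral>\<^sup>+y. ennreal (tilt (f0 x) y) * indicator (N \<times> UNIV) (x, y) \<partial>h_measure) \<partial>\<mu>)
        = (\<integral>\<^sup>+x. indicator N x \<partial>\<mu>)"
      by (simp add: nn_integral_tilt)
  qed (use N_UNIV in measurable)
  also have "\<dots> = 0" using N by simp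
  finally have "emeasure P (N \<times> UNIV) = 0" .
  moreover have "{z \<in> space P. \<not> Q (fst z)} \<subseteq> N \<times> UNIV" using N(1) by (auto simp: space_mu)
  moreover have "N \<times> UNIV \<in> sets P" using N_UNIV sets_P_pair by simp
  ultimately show ?thesis by (intro AE_I) auto
qed

lemma
  fixes \<phi> :: "vec \<Rightarrow> real"
  assumes \<phi>[measurable]: "\<phi> \<in> borel_measurable borel" and int: "integrable \<mu> \<phi>"
  shows integrable_P_fst: "integrable P (\<lambda>z. \<phi> (fst z))"
    and integral_P_fst: "(LINT z|P. \<phi> (fst z)) = (LINT x|\<mu>. \<phi> x)"
proof -
  have "(\<integral>\<^sup>+z. ennreal (norm (\<phi> (fst z))) \<partial>P) = (\<integral>\<^sup>+x. ennreal (norm (\<phi> x)) \<partial>\<mu>)"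
    by (subst nn_integral_P) (simp_all add: nn_integral_multc nn_integral_tilt)
  also have "\<dots> < \<infinity>" using integrable_iff_bounded[THEN iffD1, OF int] by simp
  finally show i: "integrable P (\<lambda>z. \<phi> (fst z))"
    by (intro integrableI_bounded) (auto intro!: measurable_P)
  have "(LINT z|P. \<phi> (fst z)) = (LINT x|\<mu>. (LINT y|h_measure. tilt (f0 x) y * \<phi> x))"
    using integral_P[of "\<lambda>z. \<phi> (fst z)", OF _ i] by simp
  also have "\<dots> = (LINT x|\<mu>. \<phi> x)" by (simp add: integral_tilt)
  finally show "(LINT z|P. \<phi> (fst z)) = (LINT x|\<mu>. \<phi> x)" .
qed

abbreviation noise :: "vec \<times> real \<Rightarrow> real" where
  "noise z \<equiv> snd z - dpsi (f0 (fst z))"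

lemma nn_integral_exp_noise:
  assumes [measurable]: "S \<in> borel_measurable borel"
  shows "(\<integral>\<^sup>+z. ennreal (exp (S (fst z) * noise z - bregman (f0 (fst z) + S (fst z)) (f0 (fst z)))) \<partial>P) = 1"
proof (subst nn_integral_P)
  have "(\<integral>\<^sup>+y. ennreal (tilt (f0 x) y) * ennreal (exp (S x * (y - dpsi (f0 x)) - bregman (f0 x + S x) (f0 x)))
      \<partial>h_measure) = 1" for x
  proof -
    define c where "c = exp (- S x * dpsi (f0 x) - bregman (f0 x + S x) (f0 x))"
    have "(\<integral>\<^sup>+y. ennreal (tilt (f0 x) y) * ennreal (exp (S x * (y - dpsi (f0 x)) - bregman (f0 x + S x) (f0 x)))
        \<partial>h_measure) = (\<integral>\<^sup>+y. ennreal (c * (tilt (f0 x) y * exp (S x * y))) \<partial>h_measure)"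
    proof (intro nn_integral_cong)
      fix y
      have "exp (S x * (y - dpsi (f0 x)) - bregman (f0 x + S x) (f0 x)) = c * exp (S x * y)"
        by (simp add: c_def algebra_simps flip: exp_add)
      then show "ennreal (tilt (f0 x) y) * ennreal (exp (S x * (y - dpsi (f0 x)) - bregman (f0 x + S x) (f0 x)))
          = ennreal (c * (tilt (f0 x) y * exp (S x * y)))"
        by (simp add: c_def ennreal_mult[symmetric] tilt_pos less_imp_le mult_ac)
    qed
    also have "\<dots> = ennreal (c * exp (psi h \<nu> (f0 x + S x) - psi h \<nu> (f0 x)))"
      by (subst nn_integral_eq_integral)
         (auto intro!: Bochner_Integration.integrable_mult_right integrable_tilt_mult_exp
           simp: c_def tilt_pos less_imp_le integral_tilt_mult_exp)
    also have "c * exp (psi h \<nu> (f0 x + S x) - psi h \<nu> (f0 x)) = 1"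
      by (simp add: c_def bregman_def algebra_simps flip: exp_add)
    finally show ?thesis by simp
  qed
  then show "(\<integral>\<^sup>+x. (\<integral>\<^sup>+y. ennreal (tilt (f0 x) y) * ennreal (exp (S (fst (x, y)) * noise (x, y)
      - bregman (f0 (fst (x, y)) + S (fst (x, y))) (f0 (fst (x, y))))) \<partial>h_measure) \<partial>\<mu>) = 1"
    by (simp add: mu.emeasure_space_1)
qed measurable

lemma integrable_noise: "integrable P noise"
proof -
  obtain M where M: "\<And>a b. \<bar>a\<bar> \<le> \<bar>B0\<bar> + 1 \<Longrightarrow> \<bar>b\<bar> \<le> \<bar>B0\<bar> + 1 \<Longrightarrow> bregman a b \<le> M * (a - b)\<^sup>2"
    using bregman_quadratic_bounds by metis
  define E where "E s z = exp (s * noise z - bregman (f0 (fst z) + s) (f0 (fst z)))" for s z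
  have E_measurable: "E s \<in> borel_measurable P" for s
    unfolding E_def by (rule measurable_P) measurable
  have nn_integral_E: "(\<integral>\<^sup>+z. ennreal (E s z) \<partial>P) = 1" for s
    unfolding E_def using nn_integral_exp_noise[of "\<lambda>_. s"] by simp
  have "AE z in P. ennreal (norm (noise z)) \<le> ennreal (exp M) * (ennreal (E 1 z) + ennreal (E (- 1) z))"
    using AE_P_fst[OF AE_mu_D]
  proof eventually_elim
    case (elim z)
    have exp_le: "exp (s * noise z) \<le> exp M * E s z" if "\<bar>s\<bar> = 1" for s
    proof -
      have "bregman (f0 (fst z) + s) (f0 (fst z)) \<le> M * s\<^sup>2"
        using M[of "f0 (fst z) + s" "f0 (fst z)"] f0_bounded[OF elim] that by auto
      also have "M * s\<^sup>2 = M" using power2_abs[of s] that by simp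
      finally have "exp (bregman (f0 (fst z) + s) (f0 (fst z))) \<le> exp M" by simp
      moreover have "exp (s * noise z) = exp (bregman (f0 (fst z) + s) (f0 (fst z))) * E s z"
        by (simp add: E_def flip: exp_add)
      ultimately show ?thesis by (simp add: E_def mult_right_mono)
    qed
    have "\<bar>noise z\<bar> \<le> exp (noise z) + exp (- noise z)"
      using abs_pow_le_fact_mult_exp_sum[of "noise z" 1] by simp
    also have "\<dots> \<le> exp M * (E 1 z + E (- 1) z)"
      using exp_le[of 1] exp_le[of "- 1"] by (simp add: distrib_left)
    finally show ?case
      by (simp add: E_def ennreal_mult[symmetric] ennreal_plus[symmetric] ennreal_leI del: ennreal_plus)
  qed
  then have "(\<integral>\<^sup>+z. ennreal (norm (noise z)) \<partial>P) \<le> (\<integral>\<^sup>+z. ennreal (exp M) * (ennreal (E 1 z) + ennreal (E (- 1) z)) \<partial>P)"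
    by (rule nn_integral_mono_AE)
  also have "\<dots> = ennreal (exp M) * 2"
    using E_measurable by (simp add: nn_integral_cmult nn_integral_add nn_integral_E one_add_one)
  also have "\<dots> < \<infinity>" by (simp add: ennreal_mult_less_top)
  finally show ?thesis by (intro integrableI_bounded) (auto intro!: measurable_P)
qed

lemma
  assumes g[measurable]: "g \<in> borel_measurable borel" and g_bounded: "AE x in \<mu>. \<bar>g x\<bar> \<le> c"
  shows integrable_noise_mult: "integrable P (\<lambda>z. noise z * g (fst z))"
    and integral_noise_mult: "(LINT z|P. noise z * g (fst z)) = 0"
proof -
  show i: "integrable P (\<lambda>z. noise z * g (fst z))"
  proof (rule Bochner_Integration.integrable_bound)
    show "integrable P (\<lambda>z. c * noise z)" using integrable_noise by simp
    show "(\<lambda>z. noise z * g (fst z)) \<in> borel_measurable P" by (rule measurable_P) measurable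
    show "AE z in P. norm (noise z * g (fst z)) \<le> norm (c * noise z)"
      using AE_P_fst[OF g_bounded]
    proof eventually_elim
      case (elim z)
      then have "\<bar>noise z\<bar> * \<bar>g (fst z)\<bar> \<le> \<bar>noise z\<bar> * \<bar>c\<bar>" by (intro mult_left_mono) auto
      then show ?case by (simp add: abs_mult mult.commute)
    qed
  qed
  have "(LINT y|h_measure. tilt (f0 x) y * ((y - dpsi (f0 x)) * g x)) = 0" for x
  proof -
    have "(LINT y|h_measure. tilt (f0 x) y * ((y - dpsi (f0 x)) * g x))
        = (LINT y|h_measure. g x * (tilt (f0 x) y * y) - (g x * dpsi (f0 x)) * tilt (f0 x) y)"
      by (intro Bochner_Integration.integral_cong) (auto simp: algebra_simps)
    also have "\<dots> = 0"
      by (simp add: integrable_tilt_mult_id integrable_tilt integral_tilt_mult_id integral_tilt)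
    finally show ?thesis .
  qed
  then show "(LINT z|P. noise z * g (fst z)) = 0"
    using integral_P[of "\<lambda>z. noise z * g (fst z)", OF _ i] by simp
qed

end

locale iid_sample = regression_model +
  fixes n :: nat
  assumes n_pos: "0 < n"
begin

abbreviation \<Omega> :: "(nat \<Rightarrow> vec \<times> real) measure" where
  "\<Omega> \<equiv> sample_space P n"

lemma prob_space_\<Omega>: "prob_space \<Omega>"
  unfolding sample_space_def by (intro prob_space_PiM prob_space_P)

lemma measurable_component: "i < n \<Longrightarrow> (\<lambda>\<omega>. \<omega> i) \<in> measurable \<Omega> P"
  unfolding sample_space_def by (intro measurable_component_singleton) auto

lemma measurable_sample_component:
  "f \<in> borel_measurable (borel \<Otimes>\<^sub>M borel) \<Longrightarrow> i < n \<Longrightarrow> (\<lambda>\<omega>. f (\<omega> i)) \<in> borel_measurable \<Omega>"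
  using measurable_compose[OF measurable_component measurable_P] by blast

lemma
  fixes f :: "vec \<times> real \<Rightarrow> real"
  assumes f: "integrable P f" and i: "i < n"
  shows integrable_sample_component: "integrable \<Omega> (\<lambda>\<omega>. f (\<omega> i))"
    and integral_sample_component: "(LINT \<omega>|\<Omega>. f (\<omega> i)) = integral\<^sup>L P f"
proof -
  have distr: "distr \<Omega> P (\<lambda>\<omega>. \<omega> i) = P"
    unfolding sample_space_def using i by (intro distr_PiM_component prob_space_P) auto
  have f_measurable: "f \<in> borel_measurable P" using f by simp
  show "integrable \<Omega> (\<lambda>\<omega>. f (\<omega> i))"
    using f integrable_distr_eq[OF measurable_component[OF i] f_measurable] distr by simp
  show "(LINT \<omega>|\<Omega>. f (\<omega> i)) = integral\<^sup>L P f"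
    using integral_distr[OF measurable_component[OF i] f_measurable] distr by simp
qed

lemma AE_sample:
  assumes "AE z in P. Q z"
  shows "AE \<omega> in \<Omega>. \<forall>i<n. Q (\<omega> i)"
proof -
  have "\<forall>i\<in>{..<n}. AE \<omega> in \<Omega>. Q (\<omega> i)"
    unfolding sample_space_def using assms by (auto intro!: AE_PiM_component prob_space_P)
  then have "AE \<omega> in \<Omega>. \<forall>i\<in>{..<n}. Q (\<omega> i)" by (subst AE_finite_all) auto
  then show ?thesis by auto
qed

lemma nn_integral_sample_prod:
  assumes "g \<in> borel_measurable P"
  shows "(\<integral>\<^sup>+\<omega>. (\<Prod>i<n. g (\<omega> i)) \<partial>\<Omega>) = (\<integral>\<^sup>+z. g z \<partial>P) ^ n"
proof -
  interpret PP: product_prob_space "\<lambda>_. P" "{..<n}"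
    by (intro product_prob_space.intro product_sigma_finite.intro product_prob_space_axioms.intro
        prob_space_imp_sigma_finite prob_space_P)
  show ?thesis
    unfolding sample_space_def using assms by (subst PP.product_nn_integral_prod) auto
qed

end

sublocale iid_sample \<subseteq> \<Omega>: prob_space \<Omega>
  by (rule prob_space_\<Omega>)

lemma (in nondegenerate_exp_family) continuous_on_emp_loss:
  assumes f: "continuous_on UNIV f"
  shows "continuous_on UNIV (\<lambda>\<omega>::nat \<Rightarrow> vec \<times> real. emp_loss h \<nu> n \<omega> f)"
proof -
  have psi: "continuous_on UNIV (psi h \<nu>)"
    using isCont_psi by (intro continuous_at_imp_continuous_on) auto
  have component: "continuous_on UNIV (\<lambda>\<omega>::nat \<Rightarrow> vec \<times> real. \<omega> i)" for i
    by (rule continuous_on_product_coordinates)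
  have "continuous_on UNIV (\<lambda>\<omega>::nat \<Rightarrow> vec \<times> real. f (fst (\<omega> i)))" for i
    by (rule continuous_on_compose2[OF f]) (auto intro: continuous_intros component)
  moreover have "continuous_on UNIV (\<lambda>\<omega>::nat \<Rightarrow> vec \<times> real. psi h \<nu> (f (fst (\<omega> i))))" for i
    by (rule continuous_on_compose2[OF psi calculation]) auto
  ultimately show ?thesis
    unfolding emp_loss_def using component by (intro continuous_intros) auto
qed

lemma (in iid_sample) measurable_emp_loss:
  assumes [measurable]: "g \<in> borel_measurable borel"
  shows "(\<lambda>\<omega>. emp_loss h \<nu> n \<omega> g) \<in> borel_measurable \<Omega>"
proof -
  have "(\<lambda>\<omega>. - snd (\<omega> i) * g (fst (\<omega> i)) + psi h \<nu> (g (fst (\<omega> i)))) \<in> borel_measurable \<Omega>"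
    if "i < n" for i
    by (rule measurable_sample_component[OF _ that, where f="\<lambda>z. - snd z * g (fst z) + psi h \<nu> (g (fst z))"])
       measurable
  then show ?thesis unfolding emp_loss_def by measurable
qed

section \<open>Estimators with values in a bounded class\<close>

locale estimator_over_class = iid_sample +
  fixes S :: "(vec \<Rightarrow> real) set" and K \<delta> m M :: real
    and fhat :: "(nat \<Rightarrow> vec \<times> real) \<Rightarrow> vec \<Rightarrow> real"
  assumes continuous_class: "\<And>f. f \<in> S \<Longrightarrow> continuous_on UNIV f"
    and bounded_class: "\<And>f x. f \<in> S \<Longrightarrow> x \<in> D \<Longrightarrow> \<bar>f x\<bar> \<le> K"
    and f0_bounded_K: "\<And>x. x \<in> D \<Longrightarrow> \<bar>f0 x\<bar> \<le> K"
    and m_pos: "0 < m" and M_nonneg: "0 \<le> M"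
    and bregman_lower: "\<And>a b. \<bar>a\<bar> \<le> K \<Longrightarrow> \<bar>b\<bar> \<le> K \<Longrightarrow> m * (a - b)\<^sup>2 \<le> bregman a b"
    and bregman_upper: "\<And>a b. \<bar>a\<bar> \<le> K \<Longrightarrow> \<bar>b\<bar> \<le> K \<Longrightarrow> bregman a b \<le> M * (a - b)\<^sup>2"
    and delta_pos: "0 < \<delta>"
    and finite_cover: "\<exists>Cs. finite Cs \<and> sup_ball_cover D \<delta> Cs S"
    and fhat_in_class: "\<And>\<omega>. fhat \<omega> \<in> S"
    and fhat_measurable[measurable]: "\<And>i. i < n \<Longrightarrow> (\<lambda>\<omega>. fhat \<omega> (fst (\<omega> i))) \<in> borel_measurable \<Omega>"
begin

lemma class_nonempty: "S \<noteq> {}"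
  using fhat_in_class by blast

lemma measurable_class: "f \<in> S \<Longrightarrow> f \<in> borel_measurable borel"
  by (intro borel_measurable_continuous_onI continuous_class)

lemma AE_sample_in_D: "AE \<omega> in \<Omega>. \<forall>i<n. fst (\<omega> i) \<in> D"
  by (rule AE_sample[OF AE_P_fst[OF AE_mu_D]])

lemma K_nonneg: "0 \<le> K"
proof -
  obtain x where "x \<in> D" using AE_mu_D mu.AE_False by fastforce
  then show ?thesis using f0_bounded_K[of x] by linarith
qed

lemma abs_diff_class_le: "f \<in> S \<Longrightarrow> x \<in> D \<Longrightarrow> \<bar>f x - f0 x\<bar> \<le> 2 * K"
  using bounded_class[of f x] f0_bounded_K[of x] by linarith

lemma bregman_le_bound: "\<bar>a\<bar> \<le> K \<Longrightarrow> \<bar>b\<bar> \<le> K \<Longrightarrow> bregman a b \<le> M * (2 * K)\<^sup>2"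
proof -
  assume ab: "\<bar>a\<bar> \<le> K" "\<bar>b\<bar> \<le> K"
  have "\<bar>a - b\<bar>\<^sup>2 \<le> (2 * K)\<^sup>2" using ab by (intro power_mono) auto
  then have "M * (a - b)\<^sup>2 \<le> M * (2 * K)\<^sup>2" using M_nonneg by (intro mult_left_mono) auto
  then show ?thesis using bregman_upper[OF ab] by linarith
qed

lemma measurable_sample_fst:
  assumes [measurable]: "g \<in> borel_measurable borel" and "i < n"
  shows "(\<lambda>\<omega>. g (fst (\<omega> i))) \<in> borel_measurable \<Omega>"
  by (rule measurable_sample_component[OF _ \<open>i < n\<close>]) measurable

lemma measurable_sample_noise[measurable]: "i < n \<Longrightarrow> (\<lambda>\<omega>. noise (\<omega> i)) \<in> borel_measurable \<Omega>"
  by (rule measurable_sample_component) measurable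

lemma
  assumes "i < n"
  shows integrable_sample_abs_noise: "integrable \<Omega> (\<lambda>\<omega>. \<bar>noise (\<omega> i)\<bar>)"
    and integral_sample_abs_noise: "(LINT \<omega>|\<Omega>. \<bar>noise (\<omega> i)\<bar>) = (LINT z|P. \<bar>noise z\<bar>)"
  using integrable_sample_component[OF integrable_abs[OF integrable_noise] assms]
    integral_sample_component[OF integrable_abs[OF integrable_noise] assms] by simp_all

definition sample_bregman :: "(vec \<Rightarrow> real) \<Rightarrow> (nat \<Rightarrow> vec \<times> real) \<Rightarrow> real" where
  "sample_bregman f \<omega> = 1 / real n * (\<Sum>i<n. bregman (f (fst (\<omega> i))) (f0 (fst (\<omega> i))))"

definition noise_corr :: "(vec \<Rightarrow> real) \<Rightarrow> (nat \<Rightarrow> vec \<times> real) \<Rightarrow> real" where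
  "noise_corr f \<omega> = 1 / real n * (\<Sum>i<n. noise (\<omega> i) * (f (fst (\<omega> i)) - f0 (fst (\<omega> i))))"

definition mean_abs_noise :: "(nat \<Rightarrow> vec \<times> real) \<Rightarrow> real" where
  "mean_abs_noise \<omega> = 1 / real n * (\<Sum>i<n. \<bar>noise (\<omega> i)\<bar>)"

lemma emp_loss_diff:
  "emp_loss h \<nu> n \<omega> f - emp_loss h \<nu> n \<omega> f0 = sample_bregman f \<omega> - noise_corr f \<omega>"
proof -
  have "bregman (f (fst (\<omega> i))) (f0 (fst (\<omega> i))) - noise (\<omega> i) * (f (fst (\<omega> i)) - f0 (fst (\<omega> i)))
    = (- snd (\<omega> i) * f (fst (\<omega> i)) + psi h \<nu> (f (fst (\<omega> i))))
      - (- snd (\<omega> i) * f0 (fst (\<omega> i)) + psi h \<nu> (f0 (fst (\<omega> i))))" for i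
    unfolding bregman_def by (simp add: algebra_simps)
  then have "(\<Sum>i<n. bregman (f (fst (\<omega> i))) (f0 (fst (\<omega> i))) - noise (\<omega> i) * (f (fst (\<omega> i)) - f0 (fst (\<omega> i))))
    = (\<Sum>i<n. - snd (\<omega> i) * f (fst (\<omega> i)) + psi h \<nu> (f (fst (\<omega> i))))
      - (\<Sum>i<n. - snd (\<omega> i) * f0 (fst (\<omega> i)) + psi h \<nu> (f0 (fst (\<omega> i))))"
    by (simp only: sum_subtractf[symmetric])
  then show ?thesis
    unfolding emp_loss_def sample_bregman_def noise_corr_def
    by (simp only: sum_subtractf[symmetric] right_diff_distrib[symmetric])
qed

lemma risk_hat_eq: "risk_hat h \<nu> P n fhat f0 = (LINT \<omega>|\<Omega>. sample_bregman (fhat \<omega>) \<omega>)"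
  unfolding risk_hat_def sample_bregman_def by (simp add: ell_eq_bregman)

lemma risk_hat_nonneg: "0 \<le> risk_hat h \<nu> P n fhat f0"
  unfolding risk_hat_eq sample_bregman_def
  by (intro integral_nonneg_AE AE_I2 mult_nonneg_nonneg sum_nonneg bregman_nonneg) auto

lemma integrable_sample_bregman: "integrable \<Omega> (\<lambda>\<omega>. sample_bregman (fhat \<omega>) \<omega>)"
proof (rule \<Omega>.integrable_const_bound[where B="M * (2 * K)\<^sup>2"])
  show "AE \<omega> in \<Omega>. norm (sample_bregman (fhat \<omega>) \<omega>) \<le> M * (2 * K)\<^sup>2"
    using AE_sample_in_D
  proof eventually_elim
    case (elim \<omega>)
    have "0 \<le> (\<Sum>i<n. bregman (fhat \<omega> (fst (\<omega> i))) (f0 (fst (\<omega> i))))"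
      by (intro sum_nonneg bregman_nonneg)
    moreover have "(\<Sum>i<n. bregman (fhat \<omega> (fst (\<omega> i))) (f0 (fst (\<omega> i)))) \<le> (\<Sum>i<n. M * (2 * K)\<^sup>2)"
      using elim by (intro sum_mono bregman_le_bound bounded_class fhat_in_class f0_bounded_K) auto
    ultimately show ?case using n_pos unfolding sample_bregman_def by (simp add: field_simps)
  qed
  show "(\<lambda>\<omega>. sample_bregman (fhat \<omega>) \<omega>) \<in> borel_measurable \<Omega>"
    unfolding sample_bregman_def using measurable_sample_fst[OF f0_measurable] by measurable
qed

lemma integrable_noise_corr: "integrable \<Omega> (\<lambda>\<omega>. noise_corr (fhat \<omega>) \<omega>)"
proof -
  have "integrable \<Omega> (\<lambda>\<omega>. noise (\<omega> i) * (fhat \<omega> (fst (\<omega> i)) - f0 (fst (\<omega> i))))" if i: "i < n" for i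
  proof (rule Bochner_Integration.integrable_bound)
    show "integrable \<Omega> (\<lambda>\<omega>. 2 * K * \<bar>noise (\<omega> i)\<bar>)"
      using integrable_sample_abs_noise[OF i] by simp
    show "(\<lambda>\<omega>. noise (\<omega> i) * (fhat \<omega> (fst (\<omega> i)) - f0 (fst (\<omega> i)))) \<in> borel_measurable \<Omega>"
      using i measurable_sample_fst[OF f0_measurable i] by measurable
    show "AE \<omega> in \<Omega>. norm (noise (\<omega> i) * (fhat \<omega> (fst (\<omega> i)) - f0 (fst (\<omega> i))))
        \<le> norm (2 * K * \<bar>noise (\<omega> i)\<bar>)"
      using AE_sample_in_D
    proof eventually_elim
      case (elim \<omega>)
      then have "\<bar>noise (\<omega> i)\<bar> * \<bar>fhat \<omega> (fst (\<omega> i)) - f0 (fst (\<omega> i))\<bar> \<le> \<bar>noise (\<omega> i)\<bar> * (2 * K)"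
        using i by (intro mult_left_mono abs_diff_class_le fhat_in_class) auto
      then show ?case using K_nonneg by (simp add: abs_mult mult.commute)
    qed
  qed
  then show ?thesis unfolding noise_corr_def
    by (intro Bochner_Integration.integrable_mult_right Bochner_Integration.integrable_sum) auto
qed

lemma
  shows integrable_mean_abs_noise: "integrable \<Omega> mean_abs_noise"
    and integral_mean_abs_noise: "(LINT \<omega>|\<Omega>. mean_abs_noise \<omega>) = (LINT z|P. \<bar>noise z\<bar>)"
proof -
  show "integrable \<Omega> mean_abs_noise"
    unfolding mean_abs_noise_def using integrable_sample_abs_noise
    by (intro Bochner_Integration.integrable_mult_right Bochner_Integration.integrable_sum) auto
  show "(LINT \<omega>|\<Omega>. mean_abs_noise \<omega>) = (LINT z|P. \<bar>noise z\<bar>)"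
    unfolding mean_abs_noise_def using integrable_sample_abs_noise n_pos
    by (simp add: Bochner_Integration.integral_sum integral_sample_abs_noise)
qed

lemma sample_bregman_nonneg: "0 \<le> sample_bregman f \<omega>"
  unfolding sample_bregman_def by (intro mult_nonneg_nonneg sum_nonneg bregman_nonneg) auto

lemma noise_corr_le_mean_abs_noise:
  assumes \<omega>: "\<forall>i<n. fst (\<omega> i) \<in> D" and f: "f \<in> S"
  shows "noise_corr f \<omega> \<le> 2 * K * mean_abs_noise \<omega>"
proof -
  have "noise (\<omega> i) * (f (fst (\<omega> i)) - f0 (fst (\<omega> i))) \<le> 2 * K * \<bar>noise (\<omega> i)\<bar>" if "i < n" for i
  proof -
    have "noise (\<omega> i) * (f (fst (\<omega> i)) - f0 (fst (\<omega> i))) \<le> \<bar>noise (\<omega> i)\<bar> * \<bar>f (fst (\<omega> i)) - f0 (fst (\<omega> i))\<bar>"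
      by (metis abs_ge_self abs_mult)
    also have "\<dots> \<le> \<bar>noise (\<omega> i)\<bar> * (2 * K)"
      using \<omega> that f by (intro mult_left_mono abs_diff_class_le) auto
    finally show ?thesis by (simp add: mult_ac)
  qed
  then have "(\<Sum>i<n. noise (\<omega> i) * (f (fst (\<omega> i)) - f0 (fst (\<omega> i)))) \<le> (\<Sum>i<n. 2 * K * \<bar>noise (\<omega> i)\<bar>)"
    by (intro sum_mono) auto
  then show ?thesis unfolding noise_corr_def mean_abs_noise_def
    by (simp add: sum_distrib_left[symmetric] divide_right_mono)
qed

definition emp_inf :: "(nat \<Rightarrow> vec \<times> real) \<Rightarrow> real" where
  "emp_inf \<omega> = (INF f\<in>S. emp_loss h \<nu> n \<omega> f)"

lemma measurable_emp_inf: "emp_inf \<in> borel_measurable \<Omega>"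
proof -
  obtain S' where S': "S' \<subseteq> S" "countable S'"
    "\<And>\<omega>. (INF f\<in>S'. emp_loss h \<nu> n \<omega> f) = (INF f\<in>S. emp_loss h \<nu> n \<omega> f)"
    using countable_subset_INF_eq[of S "\<lambda>\<omega> f. emp_loss h \<nu> n \<omega> f"] class_nonempty
      continuous_on_emp_loss continuous_class by metis
  have "(\<lambda>\<omega>. INF f\<in>S'. emp_loss h \<nu> n \<omega> f) \<in> borel_measurable \<Omega>"
    using S'(1,2) by (intro borel_measurable_cINF_real measurable_emp_loss measurable_class) auto
  then show ?thesis unfolding emp_inf_def S'(3) .
qed

lemma
  assumes \<omega>: "\<forall>i<n. fst (\<omega> i) \<in> D"
  shows emp_inf_le: "f \<in> S \<Longrightarrow> emp_inf \<omega> \<le> emp_loss h \<nu> n \<omega> f"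
    and emp_inf_ge: "emp_loss h \<nu> n \<omega> f0 - 2 * K * mean_abs_noise \<omega> \<le> emp_inf \<omega>"
proof -
  have lower: "emp_loss h \<nu> n \<omega> f0 - 2 * K * mean_abs_noise \<omega> \<le> emp_loss h \<nu> n \<omega> f" if "f \<in> S" for f
    using emp_loss_diff[of \<omega> f] sample_bregman_nonneg[of f \<omega>] noise_corr_le_mean_abs_noise[OF \<omega> that]
    by linarith
  then have "bdd_below ((\<lambda>f. emp_loss h \<nu> n \<omega> f) ` S)" by (auto simp: bdd_below_def)
  then show "f \<in> S \<Longrightarrow> emp_inf \<omega> \<le> emp_loss h \<nu> n \<omega> f"
    unfolding emp_inf_def by (rule cINF_lower)
  show "emp_loss h \<nu> n \<omega> f0 - 2 * K * mean_abs_noise \<omega> \<le> emp_inf \<omega>"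
    unfolding emp_inf_def using class_nonempty lower by (rule cINF_greatest)
qed

lemma integrable_emp_inf_excess: "integrable \<Omega> (\<lambda>\<omega>. emp_inf \<omega> - emp_loss h \<nu> n \<omega> f0)"
proof (rule Bochner_Integration.integrable_bound)
  show "integrable \<Omega> (\<lambda>\<omega>. \<bar>sample_bregman (fhat \<omega>) \<omega>\<bar> + \<bar>noise_corr (fhat \<omega>) \<omega>\<bar> + 2 * K * mean_abs_noise \<omega>)"
    by (intro Bochner_Integration.integrable_add Bochner_Integration.integrable_mult_right integrable_abs
        integrable_sample_bregman integrable_noise_corr integrable_mean_abs_noise)
  show "(\<lambda>\<omega>. emp_inf \<omega> - emp_loss h \<nu> n \<omega> f0) \<in> borel_measurable \<Omega>"
    using measurable_emp_inf measurable_emp_loss[OF f0_measurable] by measurable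
  show "AE \<omega> in \<Omega>. norm (emp_inf \<omega> - emp_loss h \<nu> n \<omega> f0)
      \<le> norm (\<bar>sample_bregman (fhat \<omega>) \<omega>\<bar> + \<bar>noise_corr (fhat \<omega>) \<omega>\<bar> + 2 * K * mean_abs_noise \<omega>)"
    using AE_sample_in_D
  proof eventually_elim
    case (elim \<omega>)
    have "0 \<le> 2 * K * mean_abs_noise \<omega>"
      unfolding mean_abs_noise_def using K_nonneg by (intro mult_nonneg_nonneg sum_nonneg) auto
    then show ?case
      using emp_inf_le[OF elim fhat_in_class[of \<omega>]] emp_inf_ge[OF elim] emp_loss_diff[of \<omega> "fhat \<omega>"]
        abs_ge_self[of "sample_bregman (fhat \<omega>) \<omega>"] abs_ge_minus_self[of "noise_corr (fhat \<omega>) \<omega>"]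
        abs_ge_zero[of "sample_bregman (fhat \<omega>) \<omega>"] abs_ge_zero[of "noise_corr (fhat \<omega>) \<omega>"]
      by (simp only: real_norm_def abs_le_iff) linarith
  qed
qed

lemma integrable_bregman_class:
  assumes f: "f \<in> S"
  shows "integrable \<mu> (\<lambda>x. bregman (f x) (f0 x))"
proof (rule mu.integrable_const_bound[where B="M * (2 * K)\<^sup>2"])
  show "AE x in \<mu>. norm (bregman (f x) (f0 x)) \<le> M * (2 * K)\<^sup>2"
    using AE_mu_D
  proof eventually_elim
    case (elim x)
    show ?case
      using bregman_le_bound[OF bounded_class[OF f elim] f0_bounded_K[OF elim]] bregman_nonneg[of "f x" "f0 x"]
      by simp
  qed
  have [measurable]: "f \<in> borel_measurable borel" by (rule measurable_class[OF f])
  show "(\<lambda>x. bregman (f x) (f0 x)) \<in> borel_measurable \<mu>"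
    by (rule measurable_mu) measurable
qed

lemma
  assumes f: "f \<in> S"
  shows integrable_emp_loss_excess: "integrable \<Omega> (\<lambda>\<omega>. emp_loss h \<nu> n \<omega> f - emp_loss h \<nu> n \<omega> f0)"
    and integral_emp_loss_excess:
      "(LINT \<omega>|\<Omega>. emp_loss h \<nu> n \<omega> f - emp_loss h \<nu> n \<omega> f0) = (LINT x|\<mu>. ell h \<nu> x f f0)"
proof -
  have [measurable]: "f \<in> borel_measurable borel" by (rule measurable_class[OF f])
  define \<phi> where "\<phi> x = bregman (f x) (f0 x)" for x
  have \<phi>_measurable[measurable]: "\<phi> \<in> borel_measurable borel" unfolding \<phi>_def by measurable
  have \<phi>_integrable: "integrable \<mu> \<phi>"
    unfolding \<phi>_def by (rule integrable_bregman_class[OF f])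
  have noise_mult: "integrable P (\<lambda>z. noise z * (f (fst z) - f0 (fst z)))"
    "(LINT z|P. noise z * (f (fst z) - f0 (fst z))) = 0"
    using AE_mu_D abs_diff_class_le[OF f]
    by (auto intro!: integrable_noise_mult integral_noise_mult[where c="2 * K"] elim: AE_mp)
  define \<xi> where "\<xi> z = \<phi> (fst z) - noise z * (f (fst z) - f0 (fst z))" for z
  have \<xi>_integrable: "integrable P \<xi>"
    unfolding \<xi>_def using integrable_P_fst[OF \<phi>_measurable \<phi>_integrable] noise_mult(1) by simp
  have "integral\<^sup>L P \<xi> = (LINT z|P. \<phi> (fst z)) - (LINT z|P. noise z * (f (fst z) - f0 (fst z)))"
    unfolding \<xi>_def
    by (rule Bochner_Integration.integral_diff[OF integrable_P_fst[OF \<phi>_measurable \<phi>_integrable] noise_mult(1)])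
  also have "\<dots> = (LINT x|\<mu>. ell h \<nu> x f f0)"
    unfolding integral_P_fst[OF \<phi>_measurable \<phi>_integrable] noise_mult(2)
    by (simp add: \<phi>_def[abs_def] ell_eq_bregman)
  finally have \<xi>_integral: "integral\<^sup>L P \<xi> = (LINT x|\<mu>. ell h \<nu> x f f0)" .
  have eq: "emp_loss h \<nu> n \<omega> f - emp_loss h \<nu> n \<omega> f0 = 1 / real n * (\<Sum>i<n. \<xi> (\<omega> i))" for \<omega>
    unfolding emp_loss_diff sample_bregman_def noise_corr_def \<xi>_def \<phi>_def
    by (simp add: sum_subtractf right_diff_distrib)
  show "integrable \<Omega> (\<lambda>\<omega>. emp_loss h \<nu> n \<omega> f - emp_loss h \<nu> n \<omega> f0)"
    unfolding eq using integrable_sample_component[OF \<xi>_integrable]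
    by (intro Bochner_Integration.integrable_mult_right Bochner_Integration.integrable_sum) auto
  show "(LINT \<omega>|\<Omega>. emp_loss h \<nu> n \<omega> f - emp_loss h \<nu> n \<omega> f0) = (LINT x|\<mu>. ell h \<nu> x f f0)"
    unfolding eq using integrable_sample_component[OF \<xi>_integrable] n_pos
    by (simp add: Bochner_Integration.integral_sum integral_sample_component[OF \<xi>_integrable] \<xi>_integral)
qed

lemma integral_emp_inf_excess_le:
  "(LINT \<omega>|\<Omega>. emp_inf \<omega> - emp_loss h \<nu> n \<omega> f0) \<le> (INF f\<in>S. LINT x|\<mu>. ell h \<nu> x f f0)"
proof (rule cINF_greatest[OF class_nonempty])
  fix f assume f: "f \<in> S"
  have "AE \<omega> in \<Omega>. emp_inf \<omega> - emp_loss h \<nu> n \<omega> f0 \<le> emp_loss h \<nu> n \<omega> f - emp_loss h \<nu> n \<omega> f0"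
    using AE_sample_in_D by eventually_elim (simp add: emp_inf_le f)
  then have "(LINT \<omega>|\<Omega>. emp_inf \<omega> - emp_loss h \<nu> n \<omega> f0)
      \<le> (LINT \<omega>|\<Omega>. emp_loss h \<nu> n \<omega> f - emp_loss h \<nu> n \<omega> f0)"
    by (intro integral_mono_AE integrable_emp_inf_excess integrable_emp_loss_excess[OF f])
  then show "(LINT \<omega>|\<Omega>. emp_inf \<omega> - emp_loss h \<nu> n \<omega> f0) \<le> (LINT x|\<mu>. ell h \<nu> x f f0)"
    by (simp only: integral_emp_loss_excess[OF f])
qed

definition tilted_increment :: "real \<Rightarrow> (vec \<Rightarrow> real) \<Rightarrow> vec \<times> real \<Rightarrow> real" where
  "tilted_increment lam t z = lam * (t (fst z) - f0 (fst z)) * noise z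
     - bregman (f0 (fst z) + lam * (t (fst z) - f0 (fst z))) (f0 (fst z))"

definition tilted_sum :: "real \<Rightarrow> (vec \<Rightarrow> real) \<Rightarrow> (nat \<Rightarrow> vec \<times> real) \<Rightarrow> real" where
  "tilted_sum lam t \<omega> = (\<Sum>i<n. tilted_increment lam t (\<omega> i))"

lemma measurable_tilted_increment:
  assumes [measurable]: "t \<in> borel_measurable borel"
  shows "tilted_increment lam t \<in> borel_measurable (borel \<Otimes>\<^sub>M borel)"
  unfolding tilted_increment_def by measurable

lemma measurable_tilted_sum: "t \<in> borel_measurable borel \<Longrightarrow> tilted_sum lam t \<in> borel_measurable \<Omega>"
  unfolding tilted_sum_def
  by (intro borel_measurable_sum measurable_sample_component measurable_tilted_increment) auto

lemma nn_integral_exp_tilted_sum: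
  assumes [measurable]: "t \<in> borel_measurable borel"
  shows "(\<integral>\<^sup>+\<omega>. ennreal (exp (tilted_sum lam t \<omega>)) \<partial>\<Omega>) = 1"
proof -
  have "(\<integral>\<^sup>+\<omega>. ennreal (exp (tilted_sum lam t \<omega>)) \<partial>\<Omega>)
      = (\<integral>\<^sup>+\<omega>. (\<Prod>i<n. ennreal (exp (tilted_increment lam t (\<omega> i)))) \<partial>\<Omega>)"
    unfolding tilted_sum_def by (intro nn_integral_cong) (simp add: exp_sum prod_ennreal)
  also have "\<dots> = (\<integral>\<^sup>+z. ennreal (exp (tilted_increment lam t z)) \<partial>P) ^ n"
  proof (rule nn_integral_sample_prod)
    have [measurable]: "tilted_increment lam t \<in> borel_measurable P"
      by (intro measurable_P measurable_tilted_increment) simp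
    show "(\<lambda>z. ennreal (exp (tilted_increment lam t z))) \<in> borel_measurable P" by measurable
  qed
  also have "(\<integral>\<^sup>+z. ennreal (exp (tilted_increment lam t z)) \<partial>P) = 1"
    unfolding tilted_increment_def using nn_integral_exp_noise[of "\<lambda>x. lam * (t x - f0 x)"] by simp
  finally show ?thesis by simp
qed

lemma integrable_tilted_sum:
  assumes t: "t \<in> S" and lam: "0 \<le> lam" "lam \<le> 1"
  shows "integrable \<Omega> (tilted_sum lam t)"
proof -
  have "integrable P (tilted_increment lam t)"
  proof (rule Bochner_Integration.integrable_bound)
    show "integrable P (\<lambda>z. 2 * K * \<bar>noise z\<bar> + M * (2 * K)\<^sup>2)"
      using integrable_noise by (intro Bochner_Integration.integrable_add integrable_abs
          Bochner_Integration.integrable_mult_right) auto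
    show "tilted_increment lam t \<in> borel_measurable P"
      by (intro measurable_P measurable_tilted_increment measurable_class t)
    show "AE z in P. norm (tilted_increment lam t z) \<le> norm (2 * K * \<bar>noise z\<bar> + M * (2 * K)\<^sup>2)"
      using AE_P_fst[OF AE_mu_D]
    proof eventually_elim
      case (elim z)
      let ?d = "t (fst z) - f0 (fst z)"
      have "\<bar>lam * ?d\<bar> \<le> 2 * K"
        using lam abs_diff_class_le[OF t elim] mult_left_le_one_le[of "\<bar>?d\<bar>" lam] by (simp add: abs_mult)
      then have "\<bar>lam * ?d * noise z\<bar> \<le> 2 * K * \<bar>noise z\<bar>" by (simp add: abs_mult mult_right_mono)
      moreover have "\<bar>f0 (fst z) + lam * ?d\<bar> \<le> K"
        using abs_convex_comb_le[OF bounded_class[OF t elim] f0_bounded_K[OF elim] lam] .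
      then have "\<bar>bregman (f0 (fst z) + lam * ?d) (f0 (fst z))\<bar> \<le> M * (2 * K)\<^sup>2"
        using bregman_le_bound f0_bounded_K[OF elim] bregman_nonneg by simp
      ultimately show ?case
        using M_nonneg unfolding tilted_increment_def by (simp add: abs_le_iff)
    qed
  qed
  then show ?thesis unfolding tilted_sum_def
    by (intro Bochner_Integration.integrable_sum integrable_sample_component) auto
qed

definition max_tilted_sum :: "(vec \<Rightarrow> real) set \<Rightarrow> real \<Rightarrow> (nat \<Rightarrow> vec \<times> real) \<Rightarrow> real" where
  "max_tilted_sum T lam \<omega> = Max ((\<lambda>t. tilted_sum lam t \<omega>) ` T)"

lemma max_tilted_sum_attained:
  assumes "finite T" "T \<noteq> {}"
  obtains t where "t \<in> T" "max_tilted_sum T lam \<omega> = tilted_sum lam t \<omega>"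
proof -
  have "max_tilted_sum T lam \<omega> \<in> (\<lambda>t. tilted_sum lam t \<omega>) ` T"
    unfolding max_tilted_sum_def using assms by (intro Max_in) auto
  then show ?thesis using that by blast
qed

lemma integrable_max_tilted_sum:
  assumes T: "finite T" "T \<subseteq> S" "T \<noteq> {}" and lam: "0 \<le> lam" "lam \<le> 1"
  shows "integrable \<Omega> (max_tilted_sum T lam)"
proof (rule Bochner_Integration.integrable_bound)
  show "integrable \<Omega> (\<lambda>\<omega>. \<Sum>t\<in>T. \<bar>tilted_sum lam t \<omega>\<bar>)"
    using T lam by (intro Bochner_Integration.integrable_sum integrable_abs integrable_tilted_sum) auto
  show "max_tilted_sum T lam \<in> borel_measurable \<Omega>"
    unfolding max_tilted_sum_def using T
    by (intro borel_measurable_Max measurable_tilted_sum measurable_class) auto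
  show "AE \<omega> in \<Omega>. norm (max_tilted_sum T lam \<omega>) \<le> norm (\<Sum>t\<in>T. \<bar>tilted_sum lam t \<omega>\<bar>)"
  proof (rule AE_I2)
    fix \<omega>
    obtain t where "t \<in> T" "max_tilted_sum T lam \<omega> = tilted_sum lam t \<omega>"
      using max_tilted_sum_attained T by metis
    then show "norm (max_tilted_sum T lam \<omega>) \<le> norm (\<Sum>t\<in>T. \<bar>tilted_sum lam t \<omega>\<bar>)"
      using T(1) member_le_sum[of t T "\<lambda>t. \<bar>tilted_sum lam t \<omega>\<bar>"] by simp
  qed
qed

lemma nn_integral_exp_max_tilted_sum_le:
  assumes T: "finite T" "T \<subseteq> S" "T \<noteq> {}"
  shows "(\<integral>\<^sup>+\<omega>. ennreal (exp (max_tilted_sum T lam \<omega>)) \<partial>\<Omega>) \<le> ennreal (real (card T))"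
proof -
  have "(\<integral>\<^sup>+\<omega>. ennreal (exp (max_tilted_sum T lam \<omega>)) \<partial>\<Omega>)
      \<le> (\<integral>\<^sup>+\<omega>. (\<Sum>t\<in>T. ennreal (exp (tilted_sum lam t \<omega>))) \<partial>\<Omega>)"
  proof (rule nn_integral_mono)
    fix \<omega>
    obtain t where "t \<in> T" "max_tilted_sum T lam \<omega> = tilted_sum lam t \<omega>"
      using max_tilted_sum_attained T by metis
    then show "ennreal (exp (max_tilted_sum T lam \<omega>)) \<le> (\<Sum>t\<in>T. ennreal (exp (tilted_sum lam t \<omega>)))"
      using T(1) member_le_sum[of t T "\<lambda>t. ennreal (exp (tilted_sum lam t \<omega>))"] by simp
  qed
  also have "\<dots> = (\<Sum>t\<in>T. (\<integral>\<^sup>+\<omega>. ennreal (exp (tilted_sum lam t \<omega>)) \<partial>\<Omega>))"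
    using T(2) measurable_tilted_sum measurable_class by (intro nn_integral_sum) auto
  also have "\<dots> = ennreal (real (card T))"
    using T(2) by (simp add: nn_integral_exp_tilted_sum measurable_class subset_iff
        ennreal_of_nat_eq_real_of_nat)
  finally show ?thesis .
qed

lemma integral_max_tilted_sum_le:
  assumes T: "finite T" "T \<subseteq> S" "T \<noteq> {}" and lam: "0 \<le> lam" "lam \<le> 1"
  shows "(LINT \<omega>|\<Omega>. max_tilted_sum T lam \<omega>) \<le> ln (card T)"
  using T by (intro \<Omega>.expectation_le_ln_of_nn_integral_exp integrable_max_tilted_sum
      nn_integral_exp_max_tilted_sum_le lam) (auto simp: card_gt_0_iff)

lemma scaled_noise_term_le:
  assumes a: "\<bar>a\<bar> \<le> K" and b: "\<bar>b\<bar> \<le> K" and t: "\<bar>t\<bar> \<le> K" and at: "\<bar>a - t\<bar> \<le> 2 * \<delta>"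
    and lam: "0 < lam" "lam \<le> 1"
  shows "lam * e * (a - b) \<le> (lam * (t - b) * e - bregman (b + lam * (t - b)) b)
      + M * lam\<^sup>2 * (2 * bregman a b / m + 8 * \<delta>\<^sup>2) + 2 * lam * \<delta> * \<bar>e\<bar>"
proof -
  have "(t - b)\<^sup>2 \<le> 2 * (a - b)\<^sup>2 + 2 * (t - a)\<^sup>2"
    using square_add_le[of "a - b" "t - a"] by simp
  also have "(t - a)\<^sup>2 \<le> (2 * \<delta>)\<^sup>2"
    using at power_mono[of "\<bar>t - a\<bar>" "2 * \<delta>" 2] by (simp add: abs_minus_commute power2_commute)
  also have "(a - b)\<^sup>2 \<le> bregman a b / m" using bregman_lower[OF a b] m_pos by (simp add: field_simps)
  finally have dist_le: "(t - b)\<^sup>2 \<le> 2 * bregman a b / m + 8 * \<delta>\<^sup>2" by simp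
  have "\<bar>b + lam * (t - b)\<bar> \<le> K" using abs_convex_comb_le[OF t b] lam by simp
  then have "bregman (b + lam * (t - b)) b \<le> M * (lam\<^sup>2 * (t - b)\<^sup>2)"
    using bregman_upper[OF _ b, of "b + lam * (t - b)"] by (simp add: power_mult_distrib)
  also have "\<dots> \<le> M * (lam\<^sup>2 * (2 * bregman a b / m + 8 * \<delta>\<^sup>2))"
    using dist_le by (intro mult_left_mono[OF _ M_nonneg] mult_left_mono) auto
  finally have "bregman (b + lam * (t - b)) b \<le> M * lam\<^sup>2 * (2 * bregman a b / m + 8 * \<delta>\<^sup>2)"
    by (simp add: mult_ac)
  moreover have "lam * e * (a - t) \<le> 2 * lam * \<delta> * \<bar>e\<bar>"
  proof -
    have "lam * e * (a - t) \<le> lam * \<bar>e\<bar> * \<bar>a - t\<bar>" using lam by (metis abs_ge_self abs_mult abs_of_pos)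
    also have "\<dots> \<le> lam * \<bar>e\<bar> * (2 * \<delta>)" using at lam by (intro mult_left_mono) auto
    finally show ?thesis by (simp add: mult_ac)
  qed
  ultimately show ?thesis by (simp add: algebra_simps)
qed

lemma noise_corr_le_max_tilted_sum:
  assumes \<omega>: "\<forall>i<n. fst (\<omega> i) \<in> D"
    and T: "T \<subseteq> S" "\<And>f. f \<in> S \<Longrightarrow> \<exists>t\<in>T. \<forall>x\<in>D. \<bar>f x - t x\<bar> \<le> 2 * \<delta>" "finite T"
    and lam: "0 < lam" "lam \<le> 1"
  shows "noise_corr (fhat \<omega>) \<omega> \<le> max_tilted_sum T lam \<omega> / (real n * lam)
    + (2 * M / m) * lam * sample_bregman (fhat \<omega>) \<omega> + 8 * M * lam * \<delta>\<^sup>2 + 2 * \<delta> * mean_abs_noise \<omega>"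
proof -
  obtain t where t: "t \<in> T" "\<forall>x\<in>D. \<bar>fhat \<omega> x - t x\<bar> \<le> 2 * \<delta>" using T(2)[OF fhat_in_class] by blast
  let ?a = "\<lambda>i. fhat \<omega> (fst (\<omega> i))" and ?b = "\<lambda>i. f0 (fst (\<omega> i))"
  have "lam * noise (\<omega> i) * (?a i - ?b i) \<le> tilted_increment lam t (\<omega> i)
      + M * lam\<^sup>2 * (2 * bregman (?a i) (?b i) / m + 8 * \<delta>\<^sup>2) + 2 * lam * \<delta> * \<bar>noise (\<omega> i)\<bar>"
    if i: "i < n" for i
  proof -
    have x: "fst (\<omega> i) \<in> D" using \<omega> i by blast
    have "t \<in> S" using t(1) T(1) by blast
    show ?thesis unfolding tilted_increment_def
      by (rule scaled_noise_term_le[OF bounded_class[OF fhat_in_class x] f0_bounded_K[OF x]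
            bounded_class[OF \<open>t \<in> S\<close> x] t(2)[rule_format, OF x] lam])
  qed
  then have "(\<Sum>i<n. lam * noise (\<omega> i) * (?a i - ?b i))
      \<le> (\<Sum>i<n. tilted_increment lam t (\<omega> i)
        + M * lam\<^sup>2 * (2 * bregman (?a i) (?b i) / m + 8 * \<delta>\<^sup>2) + 2 * lam * \<delta> * \<bar>noise (\<omega> i)\<bar>)"
    by (intro sum_mono) auto
  also have "\<dots> = tilted_sum lam t \<omega> + M * lam\<^sup>2 * (2 / m) * (\<Sum>i<n. bregman (?a i) (?b i))
        + M * lam\<^sup>2 * 8 * \<delta>\<^sup>2 * real n + 2 * lam * \<delta> * (\<Sum>i<n. \<bar>noise (\<omega> i)\<bar>)"
    unfolding tilted_sum_def by (simp add: sum.distrib sum_distrib_left algebra_simps)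
  also have "tilted_sum lam t \<omega> \<le> max_tilted_sum T lam \<omega>"
    unfolding max_tilted_sum_def using T(3) t(1) by (intro Max_ge) auto
  finally have sum_le: "lam * (\<Sum>i<n. noise (\<omega> i) * (?a i - ?b i))
      \<le> max_tilted_sum T lam \<omega> + M * lam\<^sup>2 * (2 / m) * (\<Sum>i<n. bregman (?a i) (?b i))
        + M * lam\<^sup>2 * 8 * \<delta>\<^sup>2 * real n + 2 * lam * \<delta> * (\<Sum>i<n. \<bar>noise (\<omega> i)\<bar>)"
    by (simp add: sum_distrib_left mult_ac)
  have nl: "0 < real n * lam" using n_pos lam by simp
  have "noise_corr (fhat \<omega>) \<omega> = lam * (\<Sum>i<n. noise (\<omega> i) * (?a i - ?b i)) / (real n * lam)"
    unfolding noise_corr_def using lam by simp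
  also have "\<dots> \<le> (max_tilted_sum T lam \<omega> + M * lam\<^sup>2 * (2 / m) * (\<Sum>i<n. bregman (?a i) (?b i))
        + M * lam\<^sup>2 * 8 * \<delta>\<^sup>2 * real n + 2 * lam * \<delta> * (\<Sum>i<n. \<bar>noise (\<omega> i)\<bar>)) / (real n * lam)"
    using sum_le nl by (intro divide_right_mono) auto
  also have "\<dots> = max_tilted_sum T lam \<omega> / (real n * lam) + (2 * M / m) * lam * sample_bregman (fhat \<omega>) \<omega>
      + 8 * M * lam * \<delta>\<^sup>2 + 2 * \<delta> * mean_abs_noise \<omega>"
    unfolding sample_bregman_def mean_abs_noise_def using nl lam n_pos m_pos
    by (simp add: field_simps power2_eq_square)
  finally show ?thesis .
qed

lemma integral_noise_corr_le:
  assumes lam: "0 < lam" "lam \<le> 1"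
  shows "(LINT \<omega>|\<Omega>. noise_corr (fhat \<omega>) \<omega>) \<le> ln (covering_number D \<delta> S) / (real n * lam)
    + (2 * M / m) * lam * risk_hat h \<nu> P n fhat f0 + 8 * M * lam * \<delta>\<^sup>2 + 2 * \<delta> * (LINT z|P. \<bar>noise z\<bar>)"
proof -
  obtain T where T: "finite T" "T \<subseteq> S" "T \<noteq> {}" "card T \<le> covering_number D \<delta> S"
    "\<And>f. f \<in> S \<Longrightarrow> \<exists>t\<in>T. \<forall>x\<in>D. \<bar>f x - t x\<bar> \<le> 2 * \<delta>"
    using covering_number_net_in_class[OF finite_cover class_nonempty] by blast
  have max_int: "integrable \<Omega> (max_tilted_sum T lam)"
    using T lam by (intro integrable_max_tilted_sum) auto
  have "(LINT \<omega>|\<Omega>. noise_corr (fhat \<omega>) \<omega>) \<le> (LINT \<omega>|\<Omega>. max_tilted_sum T lam \<omega> / (real n * lam)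
      + (2 * M / m) * lam * sample_bregman (fhat \<omega>) \<omega> + 8 * M * lam * \<delta>\<^sup>2 + 2 * \<delta> * mean_abs_noise \<omega>)"
  proof (rule integral_mono_AE[OF integrable_noise_corr])
    show "integrable \<Omega> (\<lambda>\<omega>. max_tilted_sum T lam \<omega> / (real n * lam)
      + (2 * M / m) * lam * sample_bregman (fhat \<omega>) \<omega> + 8 * M * lam * \<delta>\<^sup>2 + 2 * \<delta> * mean_abs_noise \<omega>)"
      using max_int integrable_sample_bregman integrable_mean_abs_noise by auto
    show "AE \<omega> in \<Omega>. noise_corr (fhat \<omega>) \<omega> \<le> max_tilted_sum T lam \<omega> / (real n * lam)
      + (2 * M / m) * lam * sample_bregman (fhat \<omega>) \<omega> + 8 * M * lam * \<delta>\<^sup>2 + 2 * \<delta> * mean_abs_noise \<omega>"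
      using AE_sample_in_D by eventually_elim (rule noise_corr_le_max_tilted_sum[OF _ T(2,5,1) lam])
  qed
  also have "\<dots> = (LINT \<omega>|\<Omega>. max_tilted_sum T lam \<omega>) / (real n * lam)
      + (2 * M / m) * lam * risk_hat h \<nu> P n fhat f0 + 8 * M * lam * \<delta>\<^sup>2 + 2 * \<delta> * (LINT z|P. \<bar>noise z\<bar>)"
    using max_int integrable_sample_bregman integrable_mean_abs_noise
    by (simp add: risk_hat_eq integral_mean_abs_noise \<Omega>.prob_space)
  also have "(LINT \<omega>|\<Omega>. max_tilted_sum T lam \<omega>) / (real n * lam) \<le> ln (covering_number D \<delta> S) / (real n * lam)"
  proof (intro divide_right_mono order.trans[OF integral_max_tilted_sum_le[OF T(1-3)]])
    have "0 < card T" using T(1,3) by (simp add: card_gt_0_iff)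
    then show "ln (real (card T)) \<le> ln (real (covering_number D \<delta> S))"
      using T(4) by (intro ln_mono) auto
  qed (use lam n_pos in auto)
  finally show ?thesis by simp
qed

lemma risk_hat_le:
  assumes lam: "0 < lam" "lam \<le> 1"
  shows "risk_hat h \<nu> P n fhat f0 \<le> (INF f\<in>S. LINT x|\<mu>. ell h \<nu> x f f0) + Delta_n h \<nu> P n S fhat
    + ln (covering_number D \<delta> S) / (real n * lam)
    + (2 * M / m) * lam * risk_hat h \<nu> P n fhat f0 + 8 * M * lam * \<delta>\<^sup>2 + 2 * \<delta> * (LINT z|P. \<bar>noise z\<bar>)"
proof -
  let ?gap = "\<lambda>\<omega>. emp_loss h \<nu> n \<omega> (fhat \<omega>) - emp_inf \<omega>"
  let ?excess = "\<lambda>\<omega>. emp_inf \<omega> - emp_loss h \<nu> n \<omega> f0"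
  have decomposition: "sample_bregman (fhat \<omega>) \<omega> = ?gap \<omega> + ?excess \<omega> + noise_corr (fhat \<omega>) \<omega>" for \<omega>
    using emp_loss_diff[of \<omega> "fhat \<omega>"] by simp
  have gap_int: "integrable \<Omega> ?gap"
  proof -
    have "integrable \<Omega> (\<lambda>\<omega>. sample_bregman (fhat \<omega>) \<omega> - ?excess \<omega> - noise_corr (fhat \<omega>) \<omega>)"
      by (intro Bochner_Integration.integrable_diff integrable_sample_bregman
          integrable_emp_inf_excess integrable_noise_corr)
    then show ?thesis by (simp add: decomposition)
  qed
  have "risk_hat h \<nu> P n fhat f0 = (LINT \<omega>|\<Omega>. ?gap \<omega> + ?excess \<omega> + noise_corr (fhat \<omega>) \<omega>)"
    unfolding risk_hat_eq by (intro Bochner_Integration.integral_cong refl decomposition)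
  also have "\<dots> = (LINT \<omega>|\<Omega>. ?gap \<omega>) + (LINT \<omega>|\<Omega>. ?excess \<omega>) + (LINT \<omega>|\<Omega>. noise_corr (fhat \<omega>) \<omega>)"
    using gap_int integrable_emp_inf_excess integrable_noise_corr
    by (simp only: Bochner_Integration.integral_add Bochner_Integration.integrable_add)
  also have "(LINT \<omega>|\<Omega>. ?gap \<omega>) = Delta_n h \<nu> P n S fhat"
    by (simp add: Delta_n_def emp_inf_def)
  finally show ?thesis
    using integral_emp_inf_excess_le integral_noise_corr_le[OF lam] by linarith
qed

lemma oracle_bound:
  assumes C: "4 * M / m \<le> C" "16 * M \<le> C" "2 \<le> C" "(LINT z|P. \<bar>noise z\<bar>) \<le> C"
  defines "R \<equiv> risk_hat h \<nu> P n fhat f0" and "N \<equiv> real (covering_number D \<delta> S)"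
  shows "R \<le> (INF f\<in>S. LINT x|\<mu>. ell h \<nu> x f f0) + sqrt (2 * C * R * ln N / real n)
    + sqrt (2 * C) * (ln N / real n + sqrt (ln N / real n) * \<delta>) + 2 * \<delta> * C + Delta_n h \<nu> P n S fhat"
proof -
  define Lg where "Lg = ln N / real n"
  define J where "J = (INF f\<in>S. LINT x|\<mu>. ell h \<nu> x f f0) + Delta_n h \<nu> P n S fhat
    + 2 * \<delta> * (LINT z|P. \<bar>noise z\<bar>)"
  define A where "A = (2 * M / m) * R + 8 * M * \<delta>\<^sup>2"
  have R: "0 \<le> R" unfolding R_def by (rule risk_hat_nonneg)
  have Lg: "0 \<le> Lg"
    using covering_number_pos[OF finite_cover class_nonempty] unfolding Lg_def N_def by simp
  have A: "0 \<le> A" unfolding A_def using R m_pos M_nonneg by simp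
  have "R \<le> J + 2 * sqrt (Lg * A) + 2 * Lg"
  proof (rule le_of_lambda_tradeoff[OF Lg A])
    fix lam :: real assume lam: "0 < lam" "lam \<le> 1"
    show "R \<le> J + Lg / lam + lam * A"
      using risk_hat_le[OF lam] by (simp add: R_def Lg_def N_def J_def A_def algebra_simps)
  qed
  also have "2 * sqrt (Lg * A) \<le> sqrt (2 * C * R * Lg) + sqrt (2 * C) * (sqrt Lg * \<delta>)"
  proof -
    have "sqrt (Lg * A) \<le> sqrt (Lg * (2 * M / m * R)) + sqrt (Lg * (8 * M * \<delta>\<^sup>2))"
      unfolding A_def distrib_left using R Lg m_pos M_nonneg by (intro sqrt_add_le_add_sqrt) auto
    then have "2 * sqrt (Lg * A) \<le> 2 * sqrt (Lg * (2 * M / m * R)) + 2 * sqrt (Lg * (8 * M * \<delta>\<^sup>2))"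
      by simp
    also have "2 * sqrt (Lg * (2 * M / m * R)) = sqrt (2 * (4 * M / m) * R * Lg)"
      using real_sqrt_four_mult[of "Lg * (2 * M / m * R)"] by (simp add: mult_ac)
    also have "\<dots> \<le> sqrt (2 * C * R * Lg)"
      using C(1) R Lg by (intro real_sqrt_le_mono mult_right_mono) auto
    also have "2 * sqrt (Lg * (8 * M * \<delta>\<^sup>2)) = sqrt (32 * M) * (sqrt Lg * \<delta>)"
      using real_sqrt_four_mult[of "8 * M", symmetric] delta_pos by (simp add: real_sqrt_mult mult_ac)
    also have "\<dots> \<le> sqrt (2 * C) * (sqrt Lg * \<delta>)"
      using C(2) delta_pos Lg by (intro mult_right_mono real_sqrt_le_mono) auto
    finally show ?thesis by simp
  qed
  also have "2 * Lg \<le> sqrt (2 * C) * Lg"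
    using C(3) Lg by (intro mult_right_mono) (auto simp: real_le_rsqrt)
  also have "J \<le> (INF f\<in>S. LINT x|\<mu>. ell h \<nu> x f f0) + Delta_n h \<nu> P n S fhat + 2 * \<delta> * C"
    unfolding J_def using C(4) delta_pos by simp
  finally show ?thesis by (simp add: Lg_def algebra_simps)
qed

end

lemma (in regression_model) estimator_over_relu_net_class:
  fixes F \<delta> m M :: real
  defines "K \<equiv> max \<bar>F\<bar> \<bar>B0\<bar>"
  assumes "0 < n" "0 < \<delta>" "\<exists>Cs. finite Cs \<and> sup_ball_cover D \<delta> Cs (relu_net_class D L p s F)"
    and "\<forall>\<omega>. fhat \<omega> \<in> relu_net_class D L p s F"
    and "\<forall>i<n. (\<lambda>\<omega>. fhat \<omega> (fst (\<omega> i))) \<in> borel_measurable (sample_space P n)"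
    and "0 < m" "0 < M"
    and "\<And>a b. \<bar>a\<bar> \<le> K \<Longrightarrow> \<bar>b\<bar> \<le> K \<Longrightarrow> m * (a - b)\<^sup>2 \<le> bregman a b"
    and "\<And>a b. \<bar>a\<bar> \<le> K \<Longrightarrow> \<bar>b\<bar> \<le> K \<Longrightarrow> bregman a b \<le> M * (a - b)\<^sup>2"
  shows "estimator_over_class \<nu> h \<mu> f0 P D B0 n (relu_net_class D L p s F) K \<delta> m M fhat"
proof (intro estimator_over_class.intro iid_sample.intro iid_sample_axioms.intro
    estimator_over_class_axioms.intro regression_model_axioms)
  show "\<bar>f x\<bar> \<le> K" if "f \<in> relu_net_class D L p s F" "x \<in> D" for f x
    using that by (auto simp: relu_net_class_def K_def)
  show "\<bar>f0 x\<bar> \<le> K" if "x \<in> D" for x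
    using f0_bounded[OF that] by (simp add: K_def)
qed (use assms continuous_on_relu_net_class in auto)

theorem lemma6:
  fixes \<nu> :: "real measure" and h :: "real \<Rightarrow> real" and f0 :: "vec \<Rightarrow> real"
    and \<mu> :: "vec measure" and P :: "(vec \<times> real) measure" and D :: "vec set"
    and \<kappa> F :: real
  assumes nu: "sets \<nu> = sets borel"
    and h_meas: "h \<in> borel_measurable borel" and h_nonneg: "\<And>y. 0 \<le> h y"
    and psi_finite: "\<And>\<theta>. integrable \<nu> (\<lambda>y. h y * exp (\<theta> * y))"
    and mu: "prob_space \<mu>" "sets \<mu> = sets borel" and mu_D: "AE x in \<mu>. x \<in> D"
    and f0_meas: "f0 \<in> borel_measurable borel"
    and P_sets: "sets P = sets (borel :: (vec \<times> real) measure)"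
    and P_law: "\<And>A B. A \<in> sets borel \<Longrightarrow> B \<in> sets borel \<Longrightarrow>
        emeasure P (A \<times> B) = ennreal (LINT x:A|\<mu>. (LINT y:B|\<nu>. cond_dens h \<nu> f0 x y))"
    and A1_support: "\<exists>y1 y2. y1 \<noteq> y2 \<and> y1 \<in> h_support h \<nu> \<and> y2 \<in> h_support h \<nu>"
    and A1_bounded: "\<exists>B. \<forall>x\<in>D. \<bar>f0 x\<bar> \<le> B"
    and kappa: "\<kappa> > 0"
    and A1_tail: "AE x in \<mu>. \<forall>t>0.
        (LINT y|\<nu>. indicator {y. t \<le> \<bar>y - (LINT z|\<nu>. z * cond_dens h \<nu> f0 x z)\<bar>} y
                     * cond_dens h \<nu> f0 x y) \<le> 2 * exp (- t / \<kappa>)"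
  shows "\<exists>C>0. \<forall>(L::nat) (p::nat list) (s::nat) (n::nat) (\<delta>::real)
            (fhat :: (nat \<Rightarrow> vec \<times> real) \<Rightarrow> vec \<Rightarrow> real).
     0 < n \<longrightarrow> 0 < \<delta> \<longrightarrow>
     (\<exists>Cs. finite Cs \<and> sup_ball_cover D \<delta> Cs (relu_net_class D L p s F)) \<longrightarrow>
     (\<forall>\<omega>. fhat \<omega> \<in> relu_net_class D L p s F) \<longrightarrow>
     (\<forall>i<n. (\<lambda>\<omega>. fhat \<omega> (fst (\<omega> i))) \<in> borel_measurable (sample_space P n)) \<longrightarrow>
     (let S = relu_net_class D L p s F;
          N = real (covering_number D \<delta> S);
          R = risk_hat h \<nu> P n fhat f0
      in R \<le> (INF f\<in>S. LINT x|\<mu>. ell h \<nu> x f f0)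
              + sqrt (2 * C * R * ln N / real n)
              + sqrt (2 * C) * (ln N / real n + sqrt (ln N / real n) * \<delta>)
              + 2 * \<delta> * C
              + Delta_n h \<nu> P n S fhat)"
proof -
  obtain B0 where B0: "\<And>x. x \<in> D \<Longrightarrow> \<bar>f0 x\<bar> \<le> B0" using A1_bounded by blast
  interpret regression_model \<nu> h \<mu> f0 P D B0
    by (intro regression_model.intro regression_model_axioms.intro nondegenerate_exp_family.intro
        nondegenerate_exp_family_axioms.intro exp_family.intro)
       (fact nu h_meas h_nonneg psi_finite A1_support mu mu_D f0_meas P_sets P_law B0)+
  obtain m M where m: "0 < m" and M: "0 < M"
    and bounds: "\<And>a b. \<bar>a\<bar> \<le> max \<bar>F\<bar> \<bar>B0\<bar> \<Longrightarrow> \<bar>b\<bar> \<le> max \<bar>F\<bar> \<bar>B0\<bar> \<Longrightarrow> m * (a - b)\<^sup>2 \<le> bregman a b"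
      "\<And>a b. \<bar>a\<bar> \<le> max \<bar>F\<bar> \<bar>B0\<bar> \<Longrightarrow> \<bar>b\<bar> \<le> max \<bar>F\<bar> \<bar>B0\<bar> \<Longrightarrow> bregman a b \<le> M * (a - b)\<^sup>2"
    using bregman_quadratic_bounds[of "max \<bar>F\<bar> \<bar>B0\<bar>"] by metis
  define C where "C = 4 * M / m + 16 * M + 2 + (LINT z|P. \<bar>noise z\<bar>)"
  have C_summands: "0 \<le> 4 * M / m" "0 \<le> 16 * M" "0 \<le> (LINT z|P. \<bar>noise z\<bar>)"
    using m M by (auto intro!: integral_nonneg_AE)
  show ?thesis
  proof (intro exI[of _ C] conjI allI impI)
    show "0 < C" using C_summands unfolding C_def by linarith
    fix L p s n \<delta> and fhat :: "(nat \<Rightarrow> vec \<times> real) \<Rightarrow> vec \<Rightarrow> real"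
    assume "0 < n" "0 < \<delta>" "\<exists>Cs. finite Cs \<and> sup_ball_cover D \<delta> Cs (relu_net_class D L p s F)"
      "\<forall>\<omega>. fhat \<omega> \<in> relu_net_class D L p s F"
      "\<forall>i<n. (\<lambda>\<omega>. fhat \<omega> (fst (\<omega> i))) \<in> borel_measurable (sample_space P n)"
    with m M bounds interpret estimator_over_class \<nu> h \<mu> f0 P D B0 n "relu_net_class D L p s F"
      "max \<bar>F\<bar> \<bar>B0\<bar>" \<delta> m M fhat
      by (intro estimator_over_relu_net_class) auto
    show "let S = relu_net_class D L p s F; N = real (covering_number D \<delta> S); R = risk_hat h \<nu> P n fhat f0
      in R \<le> (INF f\<in>S. LINT x|\<mu>. ell h \<nu> x f f0) + sqrt (2 * C * R * ln N / real n)
        + sqrt (2 * C) * (ln N / real n + sqrt (ln N / real n) * \<delta>) + 2 * \<delta> * C + Delta_n h \<nu> P n S fhat"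
      unfolding Let_def by (rule oracle_bound) (use C_summands in \<open>simp_all add: C_def\<close>)
  qed
qed

end
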